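(* Let $v=\frac1{t_0}\int_0^{t_0}p_s\tilde u\,ds$ with $\tilde u=p_\eta u$, $u\in D$, $\eta\ge0$, $t_0>0$. For $\varepsilon>0$ let $v_\varepsilon=v+\varepsilon$ and $$V_\varepsilon=\frac{1}{v_\varepsilon}\cdot\frac{p_{t_0}\tilde u-\tilde u}{t_0}.$$ Then for all $t>0$ and $x\in E$, $$v_\varepsilon(x)=E^x\Big\{v_\varepsilon(X_t)\exp\Big(-\int_0^tV_\varepsilon(X_s)\,ds\Big)\Big\}.$$
   Context: $(E,\mathcal B(E),m)$ is a $\sigma$-finite measure space with $E$ a topological Lusin space. $p_t(x,\cdot)$, $t\ge0$, is a transition probability function on $E$ (probability measures, jointly measurable in $(t,x)$, $p_0(x,A)=1_A(x)$); $p_tf(x)=\int f\,dp_t(x,\cdot)$. There is a progressively measurable Markov process $(\Omega,\mathcal F^o_t,X_t,P^x)_{x\in E}$ with transition function $p_t$, $P^x(X_0=x)=1$, infinite lifetime; $E^x$ is expectation under $P^x$. $D=\{u\text{ bounded measurable},u\ge0,\int u\,dm<\infty\}$. *)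

theory Defs
  imports "HOL-Analysis.Analysis" "HOL-Probability.Probability"
begin

text \<open>Lusin space: a Hausdorff space which is the image of a Polish space under a
continuous bijection.  Every Polish space is homeomorphic to a closed subset of
the Polish space nat => real (product topology), so we quantify over such subsets.\<close>
definition lusin_space :: "'a::topological_space itself \<Rightarrow> bool" where
  "lusin_space _ \<longleftrightarrow> Hausdorff_space (euclidean :: 'a topology) \<and>
     (\<exists>(S :: (nat \<Rightarrow> real) set) (f :: (nat \<Rightarrow> real) \<Rightarrow> 'a).
        closed S \<and> continuous_on S f \<and> bij_betw f S UNIV)"

definition transition_function :: "(real \<Rightarrow> 'a::topological_space \<Rightarrow> 'a measure) \<Rightarrow> bool" where
  "transition_function p \<longleftrightarrow>
     (\<forall>t\<ge>0. \<forall>x. prob_space (p t x) \<and> sets (p t x) = sets borel) \<and>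
     (\<forall>A\<in>sets borel. (\<lambda>(t, x). measure (p t x) A)
         \<in> borel_measurable (restrict_space borel {0..} \<Otimes>\<^sub>M borel)) \<and>
     (\<forall>x. p 0 x = return borel x) \<and>
     (\<forall>s\<ge>0. \<forall>t\<ge>0. \<forall>x. \<forall>A\<in>sets borel.
         measure (p (s + t) x) A = (\<integral>y. measure (p t y) A \<partial>p s x))"

definition ptf :: "(real \<Rightarrow> 'a \<Rightarrow> 'a measure) \<Rightarrow> real \<Rightarrow> ('a \<Rightarrow> real) \<Rightarrow> 'a \<Rightarrow> real" where
  "ptf p t f x = (\<integral>y. f y \<partial>p t x)"

definition markov_process ::
  "(real \<Rightarrow> 'a::topological_space \<Rightarrow> 'a measure) \<Rightarrow> 'w set \<Rightarrow> (real \<Rightarrow> 'w measure)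
     \<Rightarrow> (real \<Rightarrow> 'w \<Rightarrow> 'a) \<Rightarrow> ('a \<Rightarrow> 'w measure) \<Rightarrow> bool" where
  "markov_process p \<Omega> F X P \<longleftrightarrow>
     (\<forall>x. prob_space (P x) \<and> space (P x) = \<Omega>) \<and>
     (\<forall>t\<ge>0. space (F t) = \<Omega> \<and> (\<forall>x. sets (F t) \<subseteq> sets (P x))) \<and>
     (\<forall>s t. 0 \<le> s \<longrightarrow> s \<le> t \<longrightarrow> sets (F s) \<subseteq> sets (F t)) \<and>
     (\<forall>t\<ge>0. (\<lambda>(s, \<omega>). X s \<omega>) \<in> measurable (restrict_space borel {0..t} \<Otimes>\<^sub>M F t) borel) \<and>
     (\<forall>x. AE \<omega> in P x. X 0 \<omega> = x) \<and>
     (\<forall>x. \<forall>s\<ge>0. \<forall>t\<ge>0. \<forall>A\<in>sets borel. \<forall>B\<in>sets (F t).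
        measure (P x) (B \<inter> {\<omega>\<in>\<Omega>. X (t + s) \<omega> \<in> A})
          = (\<integral>\<omega>. indicator B \<omega> * measure (p s (X t \<omega>)) A \<partial>P x))"

definition Dset :: "'a::topological_space measure \<Rightarrow> ('a \<Rightarrow> real) set" where
  "Dset m = {u. u \<in> borel_measurable borel \<and> bounded (range u) \<and> (\<forall>x. 0 \<le> u x) \<and>
               (\<integral>\<^sup>+x. ennreal (u x) \<partial>m) < \<infinity>}"

end

theory Submission
  imports Defs
begin

text \<open>Put g = (p[t0] u' - u') / t0 with u' = p[eta] u. Averaging the semigroup over [0, t0] gives
  p[a] v = v + int_0^a p[s] g ds, so by the Markov property
  E[Y v_eps(X r')] = E[Y v_eps(X r)] + E[Y int_r^r' g(X s) ds] for every bounded F r-measurable Y.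
  Let A r = int_0^r V_eps(X s) ds. Since V_eps v_eps = g and
  exp(-A t) = 1 - int_0^t V_eps(X r) exp(-A r) dr, choosing Y = V_eps(X r) exp(-A r) and integrating
  over r gives E[v_eps(X t) exp(-A t)] = p[t] v_eps(x) - E int_0^t exp(-A r) (g(X r) + V_eps(X r) J r) dr
  with J r = int_r^t g(X s) ds. By Fubini the last integral equals int_0^t g(X r) dr pathwise, and its
  expectation int_0^t p[r] g(x) dr is p[t] v_eps(x) - v_eps(x). All integrands are bounded because
  v_eps >= eps.\<close>

section \<open>Integrals over intervals of the real line\<close>

lemma abs_mult_le: "\<bar>x\<bar> \<le> a \<Longrightarrow> \<bar>y\<bar> \<le> b \<Longrightarrow> \<bar>x * y\<bar> \<le> a * (b::real)"
  by (simp add: abs_mult mult_mono')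

lemma integrable_indicator_bounded:
  fixes f :: "real \<Rightarrow> real"
  assumes S: "S \<in> sets borel" "S \<subseteq> {c..d}" and f: "f \<in> borel_measurable borel"
    and bound: "\<And>s. s \<in> S \<Longrightarrow> \<bar>f s\<bar> \<le> B"
  shows "integrable lborel (\<lambda>s. indicator S s * f s)"
proof -
  have "emeasure lborel S \<le> emeasure lborel {c..d}" using S by (intro emeasure_mono) auto
  also have "\<dots> < \<infinity>" by (simp add: emeasure_lborel_Icc_eq)
  finally show ?thesis
    using integrableI_bounded_set_indicator[of S lborel f B] S f bound by simp
qed

lemma Fubini_integral_bounded_support:
  fixes f :: "'a \<times> 'b \<Rightarrow> real"
  assumes "pair_sigma_finite M N" and f: "f \<in> borel_measurable (M \<Otimes>\<^sub>M N)"
    and bound: "\<And>x y. \<bar>f (x, y)\<bar> \<le> B"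
    and A: "A \<in> sets M" "emeasure M A < \<infinity>" and C: "C \<in> sets N" "emeasure N C < \<infinity>"
    and support: "\<And>x y. x \<in> space M \<Longrightarrow> y \<in> space N \<Longrightarrow> (x, y) \<notin> A \<times> C \<Longrightarrow> f (x, y) = 0"
  shows "(\<integral>x. (\<integral>y. f (x, y) \<partial>N) \<partial>M) = (\<integral>y. (\<integral>x. f (x, y) \<partial>M) \<partial>N)"
proof -
  interpret pair_sigma_finite M N by fact
  have "integrable (M \<Otimes>\<^sub>M N) f"
  proof (rule integrableI_bounded_set[where A="A \<times> C" and B=B])
    show "A \<times> C \<in> sets (M \<Otimes>\<^sub>M N)" using A C by auto
    have "emeasure (M \<Otimes>\<^sub>M N) (A \<times> C) = emeasure M A * emeasure N C"
      using A C by (intro M2.emeasure_pair_measure_Times) auto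
    also have "\<dots> < \<infinity>" using A C by (simp add: ennreal_mult_less_top)
    finally show "emeasure (M \<Otimes>\<^sub>M N) (A \<times> C) < \<infinity>" .
    show "AE z\<in>A \<times> C in M \<Otimes>\<^sub>M N. norm (f z) \<le> B"
      using bound by (intro AE_I2) (metis prod.collapse real_norm_def)
    show "AE z in M \<Otimes>\<^sub>M N. z \<notin> A \<times> C \<longrightarrow> f z = 0"
      using support by (intro AE_I2) (auto simp: space_pair_measure)
  qed (rule f)
  then have "integrable (M \<Otimes>\<^sub>M N) (\<lambda>(x, y). f (x, y))" by simp
  from Fubini_integral[OF this] show ?thesis by simp
qed

lemma Fubini_integral_indicator_Icc:
  fixes f :: "'a \<Rightarrow> real \<Rightarrow> real"
  assumes M: "finite_measure M"
    and f: "(\<lambda>z. f (fst z) (snd z)) \<in> borel_measurable (M \<Otimes>\<^sub>M lborel)"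
    and bound: "\<And>x s. s \<in> {c..d} \<Longrightarrow> \<bar>f x s\<bar> \<le> B"
  shows "(\<integral>x. (\<integral>s. indicator {c..d} s * f x s \<partial>lborel) \<partial>M)
       = (\<integral>s. (\<integral>x. indicator {c..d} s * f x s \<partial>M) \<partial>lborel)"
proof -
  interpret M: finite_measure M by (rule M)
  have "pair_sigma_finite M lborel"
    by (simp add: pair_sigma_finite_def M.sigma_finite_measure_axioms lborel.sigma_finite_measure_axioms)
  moreover have "(\<lambda>z. indicator {c..d} (snd z) * f (fst z) (snd z)) \<in> borel_measurable (M \<Otimes>\<^sub>M lborel)"
    using f by (intro borel_measurable_times measurable_compose[OF measurable_snd]) auto
  moreover have "\<bar>indicator {c..d} s * f x s\<bar> \<le> max B 0" for x s
    using bound[of s x] by (auto simp: indicator_def)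
  ultimately show ?thesis
    using Fubini_integral_bounded_support[of M lborel "\<lambda>(x, s). indicator {c..d} s * f x s" "max B 0"
        "space M" "{c..d}"]
    by (simp add: split_beta' emeasure_lborel_Icc_eq M.emeasure_finite less_top[symmetric] indicator_def)
qed

definition indef_integral :: "(real \<Rightarrow> real) \<Rightarrow> real \<Rightarrow> real" where
  "indef_integral h r = (\<integral>x. indicator {0..r} x * h x \<partial>lborel)"

lemma borel_measurable_indef_integral:
  assumes "h \<in> borel_measurable borel"
  shows "indef_integral h \<in> borel_measurable borel"
proof -
  have "(\<lambda>(r::real, x::real). of_bool (0 \<le> x \<and> x \<le> r) * h x) \<in> borel_measurable (borel \<Otimes>\<^sub>M borel)"
    using assms by measurable
  then have "(\<lambda>(r, x). indicator {0..r} x * h x) \<in> borel_measurable (borel \<Otimes>\<^sub>M lborel)"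
    by (simp add: indicator_def split_beta' cong: measurable_cong_sets)
  from lborel.borel_measurable_lebesgue_integral[OF this] show ?thesis
    by (simp add: indef_integral_def[abs_def])
qed

lemma abs_integral_indicator_Icc_le:
  fixes h :: "real \<Rightarrow> real"
  assumes cd: "c \<le> d" and bound: "\<And>x. x \<in> {c..d} \<Longrightarrow> \<bar>h x\<bar> \<le> B"
  shows "\<bar>\<integral>x. indicator {c..d} x * h x \<partial>lborel\<bar> \<le> B * (d - c)"
proof (cases "integrable lborel (\<lambda>x. indicator {c..d} x * h x)")
  case True
  have B: "0 \<le> B" using bound[of c] cd by auto
  have "\<bar>\<integral>x. indicator {c..d} x * h x \<partial>lborel\<bar> \<le> (\<integral>x. \<bar>indicator {c..d} x * h x\<bar> \<partial>lborel)"
    by (rule integral_abs_bound)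
  also have "\<dots> \<le> (\<integral>x. indicator {c..d} x * B \<partial>lborel)"
    using True bound B
    by (intro integral_mono integrable_indicator_bounded[where c=c and d=d and B=B]) (auto simp: indicator_def)
  also have "\<dots> = B * (d - c)" using cd by (simp add: mult.commute)
  finally show ?thesis .
next
  case False
  then show ?thesis using bound[of c] cd by (simp add: not_integrable_integral_eq)
qed

lemma abs_indef_integral_le:
  assumes r: "r \<in> {0..s}" and bound: "\<And>x. x \<in> {0..s} \<Longrightarrow> \<bar>h x\<bar> \<le> B"
  shows "\<bar>indef_integral h r\<bar> \<le> B * s"
proof -
  have "\<bar>indef_integral h r\<bar> \<le> B * (r - 0)"
    unfolding indef_integral_def using r bound by (intro abs_integral_indicator_Icc_le) auto
  also have "\<dots> \<le> B * s" using r bound[of 0] by (intro mult_left_mono) auto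
  finally show ?thesis .
qed

lemma indef_integral_diff:
  fixes k :: "real \<Rightarrow> real"
  assumes k: "k \<in> borel_measurable borel" and bound: "\<And>x. x \<in> {0..s} \<Longrightarrow> \<bar>k x\<bar> \<le> B"
    and a: "a \<in> {0..s}"
  shows "indef_integral k s - indef_integral k a = (\<integral>b. indicator {a..s} b * k b \<partial>lborel)"
proof -
  have "indef_integral k s = (\<integral>b. indicator {0..<a} b * k b + indicator {a..s} b * k b \<partial>lborel)"
    unfolding indef_integral_def using a
    by (intro Bochner_Integration.integral_cong) (auto simp: indicator_def)
  also have "\<dots> = (\<integral>b. indicator {0..<a} b * k b \<partial>lborel) + (\<integral>b. indicator {a..s} b * k b \<partial>lborel)"
    using a bound
    by (intro Bochner_Integration.integral_add integrable_indicator_bounded[OF _ _ k, where c=0 and d=s and B=B])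
      auto
  also have "(\<integral>b. indicator {0..<a} b * k b \<partial>lborel) = indef_integral k a"
    unfolding indef_integral_def
  proof (rule integral_cong_AE)
    show "AE b in lborel. indicator {0..<a} b * k b = indicator {0..a} b * k b"
      by (rule AE_mp[OF AE_not_in[OF finite_imp_null_set_lborel[of "{a}"]]])
        (auto simp: indicator_def)
  qed (use k in auto)
  finally show ?thesis by simp
qed

lemma integral_times_tail_integral:
  fixes h k :: "real \<Rightarrow> real"
  assumes h: "h \<in> borel_measurable borel" "\<And>x. x \<in> {0..s} \<Longrightarrow> \<bar>h x\<bar> \<le> Bh"
    and k: "k \<in> borel_measurable borel" "\<And>x. x \<in> {0..s} \<Longrightarrow> \<bar>k x\<bar> \<le> Bk"
  shows "(\<integral>a. indicator {0..s} a * (h a * (\<integral>b. indicator {a..s} b * k b \<partial>lborel)) \<partial>lborel)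
       = (\<integral>b. indicator {0..s} b * (k b * indef_integral h b) \<partial>lborel)"
proof -
  let ?F = "\<lambda>(a, b). indicator {0..s} a * h a * (indicator {a..s} b * k b)"
  have "(\<lambda>(a::real, b::real). of_bool (0 \<le> a \<and> a \<le> s) * h a * (of_bool (a \<le> b \<and> b \<le> s) * k b))
      \<in> borel_measurable (borel \<Otimes>\<^sub>M borel)"
    using h k by measurable
  then have meas: "?F \<in> borel_measurable (lborel \<Otimes>\<^sub>M lborel)"
    by (simp add: indicator_def split_beta' cong: measurable_cong_sets)
  have bound: "\<bar>?F (a, b)\<bar> \<le> \<bar>Bh\<bar> * \<bar>Bk\<bar>" for a b
    using h(2)[of a] k(2)[of b] by (auto simp: indicator_def abs_mult intro: mult_mono)
  have swap: "(\<integral>a. (\<integral>b. ?F (a, b) \<partial>lborel) \<partial>lborel) = (\<integral>b. (\<integral>a. ?F (a, b) \<partial>lborel) \<partial>lborel)"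
    by (rule Fubini_integral_bounded_support[OF _ meas bound, where A="{0..s}" and C="{0..s}"])
      (auto simp: emeasure_lborel_Icc_eq indicator_def intro: lborel_pair.pair_sigma_finite_axioms)
  have inner: "(\<integral>a. ?F (a, b) \<partial>lborel) = indicator {0..s} b * (k b * indef_integral h b)" for b
  proof -
    have "(\<integral>a. ?F (a, b) \<partial>lborel) = (\<integral>a. indicator {0..s} b * k b * (indicator {0..b} a * h a) \<partial>lborel)"
      by (intro Bochner_Integration.integral_cong) (auto simp: indicator_def)
    then show ?thesis by (simp add: indef_integral_def)
  qed
  have "(\<integral>a. indicator {0..s} a * (h a * (\<integral>b. indicator {a..s} b * k b \<partial>lborel)) \<partial>lborel)
      = (\<integral>a. (\<integral>b. ?F (a, b) \<partial>lborel) \<partial>lborel)"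
    by (simp add: mult.assoc)
  also note swap
  also have "(\<integral>b. (\<integral>a. ?F (a, b) \<partial>lborel) \<partial>lborel)
      = (\<integral>b. indicator {0..s} b * (k b * indef_integral h b) \<partial>lborel)"
    by (rule Bochner_Integration.integral_cong[OF refl inner])
  finally show ?thesis .
qed

lemma indef_integral_mult:
  fixes h k :: "real \<Rightarrow> real"
  assumes h: "h \<in> borel_measurable borel" "\<And>x. x \<in> {0..s} \<Longrightarrow> \<bar>h x\<bar> \<le> Bh"
    and k: "k \<in> borel_measurable borel" "\<And>x. x \<in> {0..s} \<Longrightarrow> \<bar>k x\<bar> \<le> Bk" and s: "0 \<le> s"
  shows "indef_integral h s * indef_integral k s
       = (\<integral>r. indicator {0..s} r * (h r * indef_integral k r + k r * indef_integral h r) \<partial>lborel)"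
proof -
  let ?A = "indef_integral h" and ?K = "indef_integral k"
  have A: "?A \<in> borel_measurable borel" "\<And>r. r \<in> {0..s} \<Longrightarrow> \<bar>?A r\<bar> \<le> Bh * s"
    using h by (auto intro: borel_measurable_indef_integral abs_indef_integral_le)
  have K: "?K \<in> borel_measurable borel" "\<And>r. r \<in> {0..s} \<Longrightarrow> \<bar>?K r\<bar> \<le> Bk * s"
    using k by (auto intro: borel_measurable_indef_integral abs_indef_integral_le)
  have int_hK: "integrable lborel (\<lambda>r. indicator {0..s} r * (h r * ?K r))"
    using h K by (intro integrable_indicator_bounded[where c=0 and d=s and B="Bh * (Bk * s)"] abs_mult_le) auto
  have int_kA: "integrable lborel (\<lambda>r. indicator {0..s} r * (k r * ?A r))"
    using k A by (intro integrable_indicator_bounded[where c=0 and d=s and B="Bk * (Bh * s)"] abs_mult_le) auto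
  have int_hK': "integrable lborel (\<lambda>r. indicator {0..s} r * (h r * (?K s - ?K r)))"
  proof -
    have "\<bar>?K s - ?K r\<bar> \<le> 2 * (Bk * s)" if "r \<in> {0..s}" for r
      using K(2)[of s] K(2)[of r] that s by (auto simp: abs_le_iff)
    then show ?thesis
      using h K by (intro integrable_indicator_bounded[where c=0 and d=s and B="Bh * (2 * (Bk * s))"]
          abs_mult_le) auto
  qed
  have "?A s * ?K s = (\<integral>r. indicator {0..s} r * h r * ?K s \<partial>lborel)"
    unfolding indef_integral_def[of h s] by simp
  also have "\<dots> = (\<integral>r. indicator {0..s} r * (h r * ?K r) + indicator {0..s} r * (h r * (?K s - ?K r)) \<partial>lborel)"
    by (intro Bochner_Integration.integral_cong) (simp_all add: algebra_simps)
  also have "\<dots> = (\<integral>r. indicator {0..s} r * (h r * ?K r) \<partial>lborel)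
      + (\<integral>r. indicator {0..s} r * (h r * (?K s - ?K r)) \<partial>lborel)"
    by (rule Bochner_Integration.integral_add[OF int_hK int_hK'])
  also have "(\<integral>r. indicator {0..s} r * (h r * (?K s - ?K r)) \<partial>lborel)
      = (\<integral>r. indicator {0..s} r * (h r * (\<integral>b. indicator {r..s} b * k b \<partial>lborel)) \<partial>lborel)"
    using indef_integral_diff[OF k] by (intro Bochner_Integration.integral_cong) (auto simp: indicator_def)
  also have "\<dots> = (\<integral>r. indicator {0..s} r * (k r * ?A r) \<partial>lborel)"
    by (rule integral_times_tail_integral[OF h k])
  also have "(\<integral>r. indicator {0..s} r * (h r * ?K r) \<partial>lborel) + \<dots>
      = (\<integral>r. indicator {0..s} r * (h r * ?K r + k r * ?A r) \<partial>lborel)"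
    using Bochner_Integration.integral_add[OF int_hK int_kA] by (simp add: distrib_left)
  finally show ?thesis .
qed

lemma integral_times_indef_integral_power:
  fixes h :: "real \<Rightarrow> real"
  assumes h: "h \<in> borel_measurable borel" "\<And>x. \<bar>h x\<bar> \<le> B" and s: "0 \<le> s"
  shows "(\<integral>r. indicator {0..s} r * (h r * indef_integral h r ^ n) \<partial>lborel) = indef_integral h s ^ Suc n / Suc n"
  using s
proof (induction n arbitrary: s)
  case 0
  then show ?case by (simp add: indef_integral_def)
next
  case (Suc n)
  let ?A = "indef_integral h"
  define k where "k r = h r * ?A r ^ n" for r
  have k_meas: "k \<in> borel_measurable borel"
    unfolding k_def using h borel_measurable_indef_integral[OF h(1)] by measurable
  have k_bound: "\<bar>k x\<bar> \<le> B * (B * s) ^ n" if "x \<in> {0..s}" for x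
    unfolding k_def using h(2)[of x] abs_indef_integral_le[OF that, of h B] h(2)
    by (intro abs_mult_le) (auto simp: power_abs intro: power_mono)
  have K: "indef_integral k r = ?A r ^ Suc n / Suc n" if "0 \<le> r" for r
    using Suc.IH[OF that] by (simp add: indef_integral_def k_def)
  have "?A s * (?A s ^ Suc n / Suc n) = ?A s * indef_integral k s"
    using K[OF Suc.prems] by simp
  also have "\<dots> = (\<integral>r. indicator {0..s} r * (h r * indef_integral k r + k r * ?A r) \<partial>lborel)"
    using h by (intro indef_integral_mult[OF h(1) _ k_meas k_bound Suc.prems]) auto
  also have "\<dots> = (\<integral>r. (1 / Suc n + 1) * (indicator {0..s} r * (h r * ?A r ^ Suc n)) \<partial>lborel)"
  proof (intro Bochner_Integration.integral_cong refl)
    fix r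
    show "indicator {0..s} r * (h r * indef_integral k r + k r * ?A r)
        = (1 / Suc n + 1) * (indicator {0..s} r * (h r * ?A r ^ Suc n))"
    proof (cases "r \<in> {0..s}")
      case True
      then have "0 \<le> r" by simp
      then show ?thesis using True by (simp only: K) (simp add: k_def field_simps)
    qed simp
  qed
  also have "\<dots> = (1 / Suc n + 1) * (\<integral>r. indicator {0..s} r * (h r * ?A r ^ Suc n) \<partial>lborel)"
    by simp
  finally show ?case by (simp add: field_simps)
qed

lemma integral_suminf_indicator_Icc:
  fixes f :: "nat \<Rightarrow> real \<Rightarrow> real"
  assumes f: "\<And>i. f i \<in> borel_measurable borel" and bound: "\<And>i r. r \<in> {0..s} \<Longrightarrow> \<bar>f i r\<bar> \<le> c i"
    and c: "summable c" and s: "0 \<le> s"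
  shows "(\<integral>r. indicator {0..s} r * (\<Sum>i. f i r) \<partial>lborel) = (\<Sum>i. \<integral>r. indicator {0..s} r * f i r \<partial>lborel)"
proof -
  let ?g = "\<lambda>i r. indicator {0..s} r * f i r"
  have g_bound: "\<bar>?g i r\<bar> \<le> c i" for i r
    using bound[of 0 i] bound[of r i] s by (auto simp: indicator_def)
  have g_int: "integrable lborel (?g i)" for i
    using f bound by (intro integrable_indicator_bounded) auto
  have "(\<integral>r. indicator {0..s} r * (\<Sum>i. f i r) \<partial>lborel) = (\<integral>r. (\<Sum>i. ?g i r) \<partial>lborel)"
  proof (intro Bochner_Integration.integral_cong refl)
    fix r
    show "indicator {0..s} r * (\<Sum>i. f i r) = (\<Sum>i. ?g i r)"
    proof (cases "r \<in> {0..s}")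
      case True
      then have "summable (\<lambda>i. f i r)"
        using bound by (intro summable_comparison_test[OF _ c]) auto
      then show ?thesis by (simp add: suminf_mult)
    qed simp
  qed
  also have "\<dots> = (\<Sum>i. \<integral>r. ?g i r \<partial>lborel)"
  proof (rule integral_suminf[OF g_int])
    show "AE r in lborel. summable (\<lambda>i. norm (?g i r))"
      using g_bound by (intro AE_I2 summable_comparison_test[OF _ c]) auto
    have "(\<integral>r. norm (?g i r) \<partial>lborel) \<le> c i * s" for i
    proof -
      have "(\<integral>r. norm (?g i r) \<partial>lborel) \<le> (\<integral>r. indicator {0..s} r * c i \<partial>lborel)"
        using g_int g_bound bound
        by (intro integral_mono integrable_indicator_bounded[where c=0 and d=s and B="\<bar>c i\<bar>"])
          (auto simp: indicator_def)
      then show ?thesis using s by (simp add: mult.commute)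
    qed
    then show "summable (\<lambda>i. \<integral>r. norm (?g i r) \<partial>lborel)"
      by (intro summable_comparison_test[OF _ summable_mult2[OF c]]) auto
  qed
  finally show ?thesis .
qed

lemma exp_neg_sums: "(\<lambda>i. (-1) ^ i / fact i * x ^ i) sums exp (- x::real)"
proof -
  have "(\<lambda>i. (- x) ^ i /\<^sub>R fact i) = (\<lambda>i. (-1) ^ i / fact i * x ^ i)"
    by (simp add: power_minus[of x] divide_inverse mult_ac)
  with exp_converges[of "- x"] show ?thesis by simp
qed

lemma one_minus_exp_neg_sums: "(\<lambda>i. (-1) ^ i * x ^ Suc i / fact (Suc i)) sums (1 - exp (- x::real))"
proof -
  let ?g = "\<lambda>i. (-1) ^ i / fact i * x ^ i"
  have "(\<lambda>i. ?g (Suc i)) sums (exp (- x) - 1)"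
    using exp_neg_sums[of x] by (subst sums_Suc_iff) simp
  from sums_minus[OF this] show ?thesis
    by (simp add: power_Suc[of "-1::real"] divide_inverse mult_ac)
qed

text \<open>Since \<open>h\<close> is only measurable, its indefinite integral is merely absolutely continuous and the
  fundamental theorem of calculus is not available; instead \<open>exp\<close> is expanded into its power series
  and integrated term by term.\<close>

lemma integral_times_exp_neg_indef_integral:
  fixes h :: "real \<Rightarrow> real"
  assumes h: "h \<in> borel_measurable borel" "\<And>x. \<bar>h x\<bar> \<le> B" and s: "0 \<le> s"
  shows "(\<integral>r. indicator {0..s} r * (h r * exp (- indef_integral h r)) \<partial>lborel)
       = 1 - exp (- indef_integral h s)"
proof -
  let ?A = "indef_integral h"
  define f where "f i r = (-1) ^ i / fact i * (h r * ?A r ^ i)" for i r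
  define c where "c i = B * (B * s) ^ i / fact i" for i
  have f_meas: "f i \<in> borel_measurable borel" for i
    unfolding f_def using h borel_measurable_indef_integral[OF h(1)] by measurable
  have f_bound: "\<bar>f i r\<bar> \<le> c i" if "r \<in> {0..s}" for i r
  proof -
    have "\<bar>h r * ?A r ^ i\<bar> \<le> B * (B * s) ^ i"
      using h(2) abs_indef_integral_le[OF that, of h B]
      by (intro abs_mult_le) (auto simp: power_abs intro: power_mono)
    then show ?thesis by (simp add: f_def c_def abs_mult divide_right_mono)
  qed
  have "summable (\<lambda>i. B * (inverse (fact i) * (B * s) ^ i))"
    by (intro summable_mult summable_exp)
  moreover have "(\<lambda>i. B * (inverse (fact i) * (B * s) ^ i)) = c"
    by (rule ext) (simp add: c_def divide_inverse)
  ultimately have c: "summable c" by simp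
  have f_sums: "(\<lambda>i. f i r) sums (h r * exp (- ?A r))" for r
    using sums_mult2[OF exp_neg_sums[of "?A r"], of "h r"] by (simp add: f_def mult_ac)
  have f_integral: "(\<integral>r. indicator {0..s} r * f i r \<partial>lborel) = (-1) ^ i * ?A s ^ Suc i / fact (Suc i)" for i
  proof -
    have "(\<integral>r. indicator {0..s} r * f i r \<partial>lborel)
        = (\<integral>r. (-1) ^ i / fact i * (indicator {0..s} r * (h r * ?A r ^ i)) \<partial>lborel)"
      unfolding f_def by (simp only: mult.left_commute)
    also have "\<dots> = (-1) ^ i / fact i * (\<integral>r. indicator {0..s} r * (h r * ?A r ^ i) \<partial>lborel)"
      by (rule integral_mult_right_zero)
    also have "\<dots> = (-1) ^ i / fact i * (?A s ^ Suc i / Suc i)"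
      by (simp add: integral_times_indef_integral_power[OF h s])
    finally show ?thesis by (simp add: fact_Suc field_simps)
  qed
  have "(\<integral>r. indicator {0..s} r * (h r * exp (- ?A r)) \<partial>lborel)
      = (\<integral>r. indicator {0..s} r * (\<Sum>i. f i r) \<partial>lborel)"
    by (simp add: sums_unique[OF f_sums])
  also have "\<dots> = (\<Sum>i. (-1) ^ i * ?A s ^ Suc i / fact (Suc i))"
    using integral_suminf_indicator_Icc[OF f_meas f_bound c s] by (simp only: f_integral)
  also have "\<dots> = 1 - exp (- ?A s)"
    by (rule sums_unique[symmetric, OF one_minus_exp_neg_sums])
  finally show ?thesis .
qed

lemma integral_exp_neg_indef_integral_times_tail:
  fixes h G :: "real \<Rightarrow> real"
  assumes h: "h \<in> borel_measurable borel" "\<And>x. \<bar>h x\<bar> \<le> B"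
    and G: "G \<in> borel_measurable borel" "\<And>x. \<bar>G x\<bar> \<le> BG" and t: "0 \<le> t"
  shows "(\<integral>r. indicator {0..t} r * (h r * exp (- indef_integral h r) * (\<integral>s. indicator {r..t} s * G s \<partial>lborel)) \<partial>lborel)
       = (\<integral>s. indicator {0..t} s * (G s * (1 - exp (- indef_integral h s))) \<partial>lborel)"
proof -
  let ?A = "indef_integral h"
  have "(\<lambda>r. h r * exp (- ?A r)) \<in> borel_measurable borel"
    using h borel_measurable_indef_integral[OF h(1)] by measurable
  moreover have "\<bar>h r * exp (- ?A r)\<bar> \<le> B * exp (B * t)" if "r \<in> {0..t}" for r
    using h(2) abs_indef_integral_le[OF that, of h B] by (intro abs_mult_le) auto
  ultimately have "(\<integral>r. indicator {0..t} r * (h r * exp (- ?A r) * (\<integral>s. indicator {r..t} s * G s \<partial>lborel)) \<partial>lborel)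
      = (\<integral>s. indicator {0..t} s * (G s * indef_integral (\<lambda>r. h r * exp (- ?A r)) s) \<partial>lborel)"
    using G by (intro integral_times_tail_integral) auto
  also have "\<dots> = (\<integral>s. indicator {0..t} s * (G s * (1 - exp (- ?A s))) \<partial>lborel)"
    using integral_times_exp_neg_indef_integral[OF h]
    by (intro Bochner_Integration.integral_cong) (auto simp: indef_integral_def[of "\<lambda>r. h r * exp (- ?A r)"] indicator_def)
  finally show ?thesis .
qed

lemma integral_Icc_shift:
  fixes \<Phi> :: "real \<Rightarrow> real"
  assumes \<Phi>: "\<Phi> \<in> borel_measurable borel" "\<And>s. \<bar>\<Phi> s\<bar> \<le> B" and a: "0 \<le> a" and t0: "0 < t0"
  shows "(\<integral>s. indicator {0..t0} s * \<Phi> (a + s) \<partial>lborel)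
       = (\<integral>s. indicator {0..t0} s * \<Phi> s \<partial>lborel) + (\<integral>s. indicator {0..a} s * (\<Phi> (s + t0) - \<Phi> s) \<partial>lborel)"
proof -
  have int: "integrable lborel (\<lambda>s. indicator {c..d} s * \<Phi> s)" for c d
    using \<Phi> by (intro integrable_indicator_bounded[where c=c and d=d]) auto
  have int_shift: "integrable lborel (\<lambda>s. indicator {0..a} s * \<Phi> (s + t0))"
    using \<Phi> by (intro integrable_indicator_bounded[where c=0 and d=a]) auto
  have shift1: "(\<integral>s. indicator {0..t0} s * \<Phi> (a + s) \<partial>lborel) = (\<integral>s. indicator {a..a+t0} s * \<Phi> s \<partial>lborel)"
    using lborel_integral_real_affine[of 1 "\<lambda>s. indicator {a..a+t0} s * \<Phi> s" a]
    by (simp add: indicator_def)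
  have shift2: "(\<integral>s. indicator {0..a} s * \<Phi> (s + t0) \<partial>lborel) = (\<integral>s. indicator {t0..a+t0} s * \<Phi> s \<partial>lborel)"
    using lborel_integral_real_affine[of 1 "\<lambda>s. indicator {t0..a+t0} s * \<Phi> s" t0]
    by (simp add: indicator_def add.commute add_le_cancel_left)
  have "AE s in lborel. indicator {a..a+t0} s * \<Phi> s
      = indicator {0..t0} s * \<Phi> s + indicator {t0..a+t0} s * \<Phi> s - indicator {0..a} s * \<Phi> s"
    by (rule AE_mp[OF AE_not_in[OF finite_imp_null_set_lborel[of "{0, a, t0, a + t0}"]]])
      (use a t0 in \<open>auto simp: indicator_def\<close>)
  then have "(\<integral>s. indicator {a..a+t0} s * \<Phi> s \<partial>lborel)
      = (\<integral>s. indicator {0..t0} s * \<Phi> s + indicator {t0..a+t0} s * \<Phi> s - indicator {0..a} s * \<Phi> s \<partial>lborel)"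
    using int by (intro integral_cong_AE) auto
  also have "\<dots> = (\<integral>s. indicator {0..t0} s * \<Phi> s \<partial>lborel) + (\<integral>s. indicator {t0..a+t0} s * \<Phi> s \<partial>lborel)
      - (\<integral>s. indicator {0..a} s * \<Phi> s \<partial>lborel)"
    using int by (simp add: Bochner_Integration.integral_add Bochner_Integration.integral_diff)
  finally have split: "(\<integral>s. indicator {a..a+t0} s * \<Phi> s \<partial>lborel)
      = (\<integral>s. indicator {0..t0} s * \<Phi> s \<partial>lborel) + (\<integral>s. indicator {t0..a+t0} s * \<Phi> s \<partial>lborel)
        - (\<integral>s. indicator {0..a} s * \<Phi> s \<partial>lborel)" .
  have "(\<integral>s. indicator {0..a} s * (\<Phi> (s + t0) - \<Phi> s) \<partial>lborel)
      = (\<integral>s. indicator {t0..a+t0} s * \<Phi> s \<partial>lborel) - (\<integral>s. indicator {0..a} s * \<Phi> s \<partial>lborel)"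
    using int int_shift by (simp add: shift2[symmetric] right_diff_distrib Bochner_Integration.integral_diff)
  with split shift1 show ?thesis by simp
qed

section \<open>Transition kernels\<close>

locale transition_kernel =
  fixes p :: "real \<Rightarrow> 'a::topological_space \<Rightarrow> 'a measure"
  assumes transition_function: "transition_function p"
begin

lemma prob_space_p: "0 \<le> t \<Longrightarrow> prob_space (p t x)"
  and sets_p: "0 \<le> t \<Longrightarrow> sets (p t x) = sets borel"
  using transition_function unfolding transition_function_def by auto

lemma measurable_p_joint:
  "(\<lambda>z. p (fst z) (snd z)) \<in> measurable (restrict_space borel {0..} \<Otimes>\<^sub>M borel) (subprob_algebra borel)"
proof (rule measurable_subprob_algebra)
  fix z assume "z \<in> space (restrict_space borel {0::real..} \<Otimes>\<^sub>M (borel :: 'a measure))"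
  then have "0 \<le> fst z" by (auto simp: space_pair_measure space_restrict_space)
  then show "subprob_space (p (fst z) (snd z))" "sets (p (fst z) (snd z)) = sets borel"
    by (simp_all add: prob_space_p sets_p prob_space_imp_subprob_space)
next
  fix A :: "'a set" assume A: "A \<in> sets borel"
  have "(\<lambda>(t, x). measure (p t x) A) \<in> borel_measurable (restrict_space borel {0..} \<Otimes>\<^sub>M borel)"
    using transition_function A unfolding transition_function_def by auto
  then have "(\<lambda>z. ennreal (measure (p (fst z) (snd z)) A))
      \<in> borel_measurable (restrict_space borel {0..} \<Otimes>\<^sub>M borel)"
    by (intro measurable_compose[OF _ measurable_ennreal]) (simp add: split_beta')
  then show "(\<lambda>z. emeasure (p (fst z) (snd z)) A) \<in> borel_measurable (restrict_space borel {0..} \<Otimes>\<^sub>M borel)"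
    by (rule measurable_cong[THEN iffD1, rotated])
      (auto simp: space_pair_measure space_restrict_space finite_measure.emeasure_eq_measure
        prob_space.finite_measure[OF prob_space_p])
qed

lemma measurable_p: "0 \<le> t \<Longrightarrow> p t \<in> measurable borel (subprob_algebra borel)"
proof -
  assume "0 \<le> t"
  then have "(\<lambda>y. (t, y)) \<in> measurable borel (restrict_space borel {0..} \<Otimes>\<^sub>M borel)"
    by (intro measurable_Pair measurable_const measurable_ident) (auto simp: space_restrict_space)
  from measurable_compose[OF this measurable_p_joint] show ?thesis by simp
qed

lemma measurable_p_from_p: "0 \<le> s \<Longrightarrow> 0 \<le> t \<Longrightarrow> p t \<in> measurable (p s x) (subprob_algebra borel)"
  by (subst measurable_cong_sets[OF sets_p refl]) (auto intro: measurable_p)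

lemma borel_measurable_ptf: "0 \<le> t \<Longrightarrow> f \<in> borel_measurable borel \<Longrightarrow> ptf p t f \<in> borel_measurable borel"
  unfolding ptf_def by (rule measurable_compose[OF measurable_p integral_measurable_subprob_algebra]) auto

lemma borel_measurable_ptf_comp:
  assumes T: "T \<in> borel_measurable N" and Y: "Y \<in> measurable N borel" and f: "f \<in> borel_measurable borel"
  shows "(\<lambda>\<omega>. ptf p (max 0 (T \<omega>)) f (Y \<omega>)) \<in> borel_measurable N"
proof -
  have "(\<lambda>\<omega>. (max 0 (T \<omega>), Y \<omega>)) \<in> measurable N (restrict_space borel {0..} \<Otimes>\<^sub>M borel)"
    using T Y by (intro measurable_Pair measurable_restrict_space2) auto
  from measurable_compose[OF this measurable_compose[OF measurable_p_joint integral_measurable_subprob_algebra]]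
  show ?thesis using f by (simp add: ptf_def)
qed

lemma integrable_p:
  "0 \<le> t \<Longrightarrow> f \<in> borel_measurable borel \<Longrightarrow> (\<And>y. \<bar>f y\<bar> \<le> B) \<Longrightarrow> integrable (p t x) (f :: 'a \<Rightarrow> real)"
  using prob_space_p[of t x] by (intro finite_measure.integrable_const_bound[where B=B])
    (auto simp: prob_space_def measurable_cong_sets[OF sets_p refl])

lemma abs_ptf_le:
  assumes t: "0 \<le> t" and f: "f \<in> borel_measurable borel" "\<And>y. \<bar>f y\<bar> \<le> B"
  shows "\<bar>ptf p t f x\<bar> \<le> B"
proof -
  interpret prob_space "p t x" using prob_space_p t by auto
  have "\<bar>\<integral>y. f y \<partial>p t x\<bar> \<le> (\<integral>y. \<bar>f y\<bar> \<partial>p t x)" by (rule integral_abs_bound)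
  also have "\<dots> \<le> B" using integrable_p[OF t f] f(2) by (intro integral_le_const) auto
  finally show ?thesis by (simp add: ptf_def)
qed

lemma ptf_nonneg: "(\<And>y. 0 \<le> f y) \<Longrightarrow> 0 \<le> ptf p t f x"
  unfolding ptf_def by (simp add: integral_nonneg_AE)

lemma ptf_diff_divide:
  assumes t: "0 \<le> t" and f: "f \<in> borel_measurable borel" "\<And>y. \<bar>f y\<bar> \<le> B"
    and g: "g \<in> borel_measurable borel" "\<And>y. \<bar>g y\<bar> \<le> B'"
  shows "ptf p t (\<lambda>z. (f z - g z) / c) x = (ptf p t f x - ptf p t g x) / c"
  unfolding ptf_def using integrable_p[OF t f] integrable_p[OF t g] by (simp add: integral_diff)

lemma ptf_add_const:
  assumes t: "0 \<le> t" and f: "f \<in> borel_measurable borel" "\<And>y. \<bar>f y\<bar> \<le> B"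
  shows "ptf p t (\<lambda>z. f z + c) x = ptf p t f x + c"
  unfolding ptf_def using integrable_p[OF t f] prob_space_p[OF t]
  by (subst Bochner_Integration.integral_add)
    (auto simp: prob_space.prob_space prob_space_def finite_measure.integrable_const)

lemma p_add_eq_bind:
  assumes s: "0 \<le> s" and t: "0 \<le> t"
  shows "p (s + t) x = p s x \<bind> p t"
proof (rule measure_eqI)
  have ne: "space (p s x) \<noteq> {}"
    using sets_eq_imp_space_eq[OF sets_p[OF s]] by auto
  show "sets (p (s + t) x) = sets (p s x \<bind> p t)"
    using s t ne by (subst sets_bind[where N=borel]) (auto simp: sets_p)
  fix A assume "A \<in> sets (p (s + t) x)"
  then have A: "A \<in> sets borel" using s t sets_p by auto
  have "(\<lambda>y. measure (p t y) A) \<in> borel_measurable (p s x)"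
    using measurable_compose[OF measurable_p_from_p[OF s t] measurable_measure_subprob_algebra[OF A]] .
  then have int: "integrable (p s x) (\<lambda>y. measure (p t y) A)"
    using prob_space_p[OF s] by (intro finite_measure.integrable_const_bound[where B=1])
      (auto simp: prob_space_def intro!: prob_space.prob_le_1 prob_space_p[OF t])
  have "emeasure (p s x \<bind> p t) A = (\<integral>\<^sup>+y. emeasure (p t y) A \<partial>p s x)"
    using ne measurable_p_from_p[OF s t] A by (rule emeasure_bind)
  also have "\<dots> = (\<integral>\<^sup>+y. ennreal (measure (p t y) A) \<partial>p s x)"
    using prob_space_p[OF t] by (intro nn_integral_cong) (simp add: prob_space_def finite_measure.emeasure_eq_measure)
  also have "\<dots> = ennreal (\<integral>y. measure (p t y) A \<partial>p s x)"
    using int by (intro nn_integral_eq_integral) auto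
  also have "\<dots> = ennreal (measure (p (s + t) x) A)"
    using transition_function s t A unfolding transition_function_def by auto
  also have "\<dots> = emeasure (p (s + t) x) A"
    using prob_space_p[of "s + t" x] s t by (simp add: prob_space_def finite_measure.emeasure_eq_measure)
  finally show "emeasure (p (s + t) x) A = emeasure (p s x \<bind> p t) A" by simp
qed

lemma ptf_add:
  assumes s: "0 \<le> s" and t: "0 \<le> t" and f: "f \<in> borel_measurable borel" "\<And>y. \<bar>f y\<bar> \<le> B"
  shows "ptf p (s + t) f x = ptf p s (ptf p t f) x"
  unfolding ptf_def p_add_eq_bind[OF s t]
proof (rule integral_bind[where K=borel and B=B and B'=1])
  show "p t \<in> measurable (p s x) (subprob_algebra borel)" by (rule measurable_p_from_p[OF s t])
  show "finite_measure (p s x)" using prob_space_p[OF s] by (simp add: prob_space_def)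
  show "AE y in p s x. emeasure (p t y) (space (p t y)) \<le> ennreal 1"
    using prob_space_p[OF t] by (auto simp: prob_space.emeasure_space_1)
qed (use f in auto)

lemma ptf_integral_ptf:
  fixes w :: "'a \<Rightarrow> real"
  assumes w: "w \<in> borel_measurable borel" "\<And>y. \<bar>w y\<bar> \<le> B" and a: "0 \<le> a" and c: "0 \<le> c"
  shows "ptf p a (\<lambda>z. \<integral>s. indicator {c..d} s * ptf p s w z \<partial>lborel) x
       = (\<integral>s. indicator {c..d} s * ptf p (a + s) w x \<partial>lborel)"
proof -
  define \<phi> where "\<phi> s z = ptf p (max 0 s) w z" for s z
  have \<phi>_eq: "indicator {c..d} s * ptf p s w z = indicator {c..d} s * \<phi> s z" for s z
    using c by (auto simp: \<phi>_def indicator_def max_def)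
  have "(\<lambda>z. \<phi> (snd z) (fst z)) \<in> borel_measurable (p a x \<Otimes>\<^sub>M lborel)"
    unfolding \<phi>_def using measurable_fst[of "p a x" lborel] measurable_snd[of "p a x" lborel]
    by (intro borel_measurable_ptf_comp w(1)) (auto simp: measurable_cong_sets[OF refl sets_p[OF a]])
  then have "(\<integral>z. (\<integral>s. indicator {c..d} s * \<phi> s z \<partial>lborel) \<partial>p a x)
      = (\<integral>s. (\<integral>z. indicator {c..d} s * \<phi> s z \<partial>p a x) \<partial>lborel)"
    using prob_space.finite_measure[OF prob_space_p[OF a]] abs_ptf_le[OF _ w]
    by (intro Fubini_integral_indicator_Icc[where B=B]) (auto simp: \<phi>_def)
  also have "\<dots> = (\<integral>s. indicator {c..d} s * ptf p (a + s) w x \<partial>lborel)"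
  proof -
    have "(\<integral>z. indicator {c..d} s * \<phi> s z \<partial>p a x) = indicator {c..d} s * ptf p (a + s) w x" for s
      using ptf_add[OF a _ w, of s x] c by (cases "s \<in> {c..d}") (auto simp: \<phi>_def ptf_def)
    then show ?thesis by (simp only:)
  qed
  finally show ?thesis by (simp only: \<phi>_eq ptf_def[of p a])
qed

lemma ptf_time_average:
  fixes w :: "'a \<Rightarrow> real"
  assumes w: "w \<in> borel_measurable borel" "\<And>y. \<bar>w y\<bar> \<le> B" and t0: "0 < t0" and a: "0 \<le> a"
  shows "ptf p a (\<lambda>z. (1/t0) * (\<integral>s. indicator {0..t0} s * ptf p s w z \<partial>lborel)) x
     = (1/t0) * (\<integral>s. indicator {0..t0} s * ptf p s w x \<partial>lborel)
       + (\<integral>s. indicator {0..a} s * ptf p s (\<lambda>z. (ptf p t0 w z - w z) / t0) x \<partial>lborel)"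
proof -
  define \<phi> where "\<phi> s = ptf p (max 0 s) w x" for s
  have \<phi>_meas: "\<phi> \<in> borel_measurable borel"
    unfolding \<phi>_def using borel_measurable_ptf_comp[of "\<lambda>s. s" borel "\<lambda>_. x" w] w by simp
  have \<phi>_bound: "\<bar>\<phi> s\<bar> \<le> B" for s
    unfolding \<phi>_def by (rule abs_ptf_le[OF _ w]) simp
  have \<phi>_eq: "indicator {0..d} s * ptf p s w x = indicator {0..d} s * \<phi> s" for d s
    by (auto simp: \<phi>_def indicator_def max_def)
  have "ptf p a (\<lambda>z. (1/t0) * (\<integral>s. indicator {0..t0} s * ptf p s w z \<partial>lborel)) x
      = (1/t0) * ptf p a (\<lambda>z. \<integral>s. indicator {0..t0} s * ptf p s w z \<partial>lborel) x"
    by (simp add: ptf_def)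
  also have "\<dots> = (1/t0) * (\<integral>s. indicator {0..t0} s * \<phi> (a + s) \<partial>lborel)"
    unfolding ptf_integral_ptf[OF w a order_refl] using a
    by (intro arg_cong[where f="(*) (1/t0)"] Bochner_Integration.integral_cong) (auto simp: \<phi>_def indicator_def)
  also have "\<dots> = (1/t0) * (\<integral>s. indicator {0..t0} s * \<phi> s \<partial>lborel)
      + (\<integral>s. indicator {0..a} s * (\<phi> (s + t0) - \<phi> s) \<partial>lborel) / t0"
    by (subst integral_Icc_shift[OF \<phi>_meas \<phi>_bound a t0]) (simp add: distrib_left)
  also have "(\<integral>s. indicator {0..a} s * (\<phi> (s + t0) - \<phi> s) \<partial>lborel) / t0
      = (\<integral>s. indicator {0..a} s * ptf p s (\<lambda>z. (ptf p t0 w z - w z) / t0) x \<partial>lborel)"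
  proof -
    have "indicator {0..a} s * (\<phi> (s + t0) - \<phi> s) / t0
        = indicator {0..a} s * ptf p s (\<lambda>z. (ptf p t0 w z - w z) / t0) x" for s
    proof (cases "s \<in> {0..a}")
      case True
      then have "ptf p s (\<lambda>z. (ptf p t0 w z - w z) / t0) x = (ptf p s (ptf p t0 w) x - ptf p s w x) / t0"
        using t0 abs_ptf_le[OF _ w]
        by (intro ptf_diff_divide[OF _ borel_measurable_ptf[OF _ w(1)] _ w, where B=B]) auto
      with True t0 show ?thesis
        using ptf_add[OF _ _ w, of s t0 x] by (simp add: \<phi>_def)
    qed simp
    then show ?thesis by (simp flip: integral_divide_zero)
  qed
  finally show ?thesis by (simp add: \<phi>_eq)
qed

end

section \<open>Markov processes\<close>

locale markov_family = transition_kernel p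
  for p :: "real \<Rightarrow> 'a::topological_space \<Rightarrow> 'a measure" +
  fixes \<Omega> :: "'w set" and F :: "real \<Rightarrow> 'w measure" and X :: "real \<Rightarrow> 'w \<Rightarrow> 'a"
    and P :: "'a \<Rightarrow> 'w measure"
  assumes markov_process: "markov_process p \<Omega> F X P"
begin

lemma prob_space_P: "prob_space (P x)" and space_P: "space (P x) = \<Omega>"
  and space_F: "0 \<le> t \<Longrightarrow> space (F t) = \<Omega>" and sets_F: "0 \<le> t \<Longrightarrow> sets (F t) \<subseteq> sets (P x)"
  and X_progressive: "0 \<le> t \<Longrightarrow> (\<lambda>(s, \<omega>). X s \<omega>) \<in> measurable (restrict_space borel {0..t} \<Otimes>\<^sub>M F t) borel"
  and AE_X_0: "AE \<omega> in P x. X 0 \<omega> = x"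
  using markov_process unfolding markov_process_def by auto

lemma finite_measure_P: "finite_measure (P x)"
  using prob_space_P by (simp add: prob_space_def)

lemma subalgebra_F: "0 \<le> t \<Longrightarrow> subalgebra (P x) (F t)"
  unfolding subalgebra_def using space_F sets_F space_P by auto

lemma measurable_F_P: "0 \<le> t \<Longrightarrow> Y \<in> borel_measurable (F t) \<Longrightarrow> Y \<in> borel_measurable (P x)"
  using measurable_from_subalg[OF subalgebra_F] by blast

lemma measurable_id_F: "0 \<le> t \<Longrightarrow> (\<lambda>\<omega>. \<omega>) \<in> measurable (P x) (F t)"
  using sets_F[of t x] space_F[of t] space_P[of x] unfolding measurable_def by auto

lemma measurable_const_F: "0 \<le> t \<Longrightarrow> \<omega> \<in> \<Omega> \<Longrightarrow> (\<lambda>_. \<omega>) \<in> measurable N (F t)"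
  using space_F by (intro measurable_const) auto

lemma integrable_P_bounded:
  "g \<in> borel_measurable (P x) \<Longrightarrow> (\<And>\<omega>. \<bar>g \<omega>\<bar> \<le> C) \<Longrightarrow> integrable (P x) (g :: 'w \<Rightarrow> real)"
  using finite_measure_P by (intro finite_measure.integrable_const_bound[where B=C]) auto

text \<open>Clipping the time to \<open>[0, t]\<close> turns progressive measurability into joint measurability of
  \<open>(n, \<omega>) \<mapsto> X (R n) \<omega>\<close> for arbitrary measurable times \<open>R\<close>.\<close>

lemma measurable_X_clip:
  assumes t: "0 \<le> t" and R: "R \<in> borel_measurable N" and W: "W \<in> measurable N (F t)"
  shows "(\<lambda>n. X (max 0 (min t (R n))) (W n)) \<in> measurable N borel"
proof -
  have "(\<lambda>n. (max 0 (min t (R n)), W n)) \<in> measurable N (restrict_space borel {0..t} \<Otimes>\<^sub>M F t)"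
    using R W t by (intro measurable_Pair measurable_restrict_space2) auto
  from measurable_compose[OF this X_progressive[OF t]] show ?thesis by simp
qed

lemma measurable_X_F:
  assumes "0 \<le> s" "s \<le> t"
  shows "X s \<in> measurable (F t) borel"
proof -
  have "max 0 (min t s) = s" using assms by simp
  with measurable_X_clip[of t "\<lambda>_. s" "F t" "\<lambda>\<omega>. \<omega>"] assms show ?thesis by simp
qed

lemma measurable_X_P: "0 \<le> s \<Longrightarrow> X s \<in> measurable (P x) borel"
  using measurable_from_subalg[OF subalgebra_F measurable_X_F] by auto

lemma borel_measurable_path_integral:
  fixes f :: "'a \<Rightarrow> real"
  assumes t: "0 \<le> t" and L: "L \<in> borel_measurable N" and U: "U \<in> borel_measurable N"
    and W: "W \<in> measurable N (F t)" and f: "f \<in> borel_measurable borel"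
  shows "(\<lambda>n. \<integral>y. indicator {L n..U n} y * f (X (max 0 (min t y)) (W n)) \<partial>lborel) \<in> borel_measurable N"
proof -
  have X: "(\<lambda>z. X (max 0 (min t (snd z))) (W (fst z))) \<in> measurable (N \<Otimes>\<^sub>M borel) borel"
    using measurable_X_clip[OF t, of snd "N \<Otimes>\<^sub>M borel" "\<lambda>z. W (fst z)"] W by simp
  have "{z \<in> space (N \<Otimes>\<^sub>M borel). snd z \<in> {L (fst z)..U (fst z)}}
      = {z \<in> space (N \<Otimes>\<^sub>M borel). L (fst z) \<le> snd z} \<inter> {z \<in> space (N \<Otimes>\<^sub>M borel). snd z \<le> U (fst z)}"
    by auto
  also have "\<dots> \<in> sets (N \<Otimes>\<^sub>M borel)"
    using L U by measurable
  finally have "(\<lambda>z. indicator {L (fst z)..U (fst z)} (snd z) * f (X (max 0 (min t (snd z))) (W (fst z))))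
      \<in> borel_measurable (N \<Otimes>\<^sub>M borel)"
    using measurable_compose[OF X f] by (intro borel_measurable_times borel_measurable_indicator') auto
  then have "(\<lambda>(n, y). indicator {L n..U n} y * f (X (max 0 (min t y)) (W n))) \<in> borel_measurable (N \<Otimes>\<^sub>M lborel)"
    by (simp add: split_beta' cong: measurable_cong_sets)
  from lborel.borel_measurable_lebesgue_integral[OF this] show ?thesis by simp
qed

lemma distr_density_X_eq_bind:
  assumes r: "0 \<le> r" and a: "0 \<le> a" and B: "B \<in> sets (F r)"
  shows "distr (density (P x) (indicator B)) borel (X (r + a))
       = density (P x) (indicator B) \<bind> (\<lambda>\<omega>. p a (X r \<omega>))"
    (is "distr ?D borel _ = _")
proof (rule measure_eqI)
  have BP: "B \<in> sets (P x)" using sets_F[OF r] B by auto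
  have ne: "\<Omega> \<noteq> {}" using prob_space.not_empty[OF prob_space_P] space_P by metis
  have Xr: "X r \<in> measurable (P x) borel" and Xra: "X (r + a) \<in> measurable (P x) borel"
    using measurable_X_P r a by auto
  have kernel: "(\<lambda>\<omega>. p a (X r \<omega>)) \<in> measurable (P x) (subprob_algebra borel)"
    using measurable_compose[OF Xr measurable_p[OF a]] .
  show "sets (distr ?D borel (X (r + a))) = sets (?D \<bind> (\<lambda>\<omega>. p a (X r \<omega>)))"
    using ne a by (subst sets_bind[where N=borel]) (auto simp: sets_p space_P)
  fix A assume "A \<in> sets (distr ?D borel (X (r + a)))"
  then have A: "A \<in> sets borel" by simp
  have pre: "X (r + a) -` A \<inter> \<Omega> \<in> sets (P x)"
    using measurable_sets[OF Xra A] space_P by simp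
  have "emeasure (distr ?D borel (X (r + a))) A = emeasure ?D (X (r + a) -` A \<inter> \<Omega>)"
    using Xra A by (subst emeasure_distr) (auto simp: space_P cong: measurable_cong_sets)
  also have "\<dots> = emeasure (P x) (B \<inter> {\<omega>\<in>\<Omega>. X (r + a) \<omega> \<in> A})"
  proof -
    have "B \<inter> {\<omega>\<in>\<Omega>. X (r + a) \<omega> \<in> A} = B \<inter> (X (r + a) -` A \<inter> \<Omega>)" by auto
    then show ?thesis using pre BP
      by (simp add: emeasure_density nn_integral_set_ennreal mult.commute
          indicator_inter_arith[symmetric] nn_integral_indicator sets.Int ennreal_indicator)
  qed
  also have "\<dots> = ennreal (\<integral>\<omega>. indicator B \<omega> * measure (p a (X r \<omega>)) A \<partial>P x)"
    using markov_process a r A B unfolding markov_process_def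
    by (simp add: finite_measure.emeasure_eq_measure[OF finite_measure_P] add.commute)
  also have "\<dots> = (\<integral>\<^sup>+\<omega>. indicator B \<omega> * emeasure (p a (X r \<omega>)) A \<partial>P x)"
  proof -
    have "(\<lambda>\<omega>. measure (p a (X r \<omega>)) A) \<in> borel_measurable (P x)"
      using measurable_compose[OF kernel measurable_measure_subprob_algebra[OF A]] .
    then have "integrable (P x) (\<lambda>\<omega>. indicator B \<omega> * measure (p a (X r \<omega>)) A)"
      using BP by (intro integrable_P_bounded[where C=1])
        (auto simp: indicator_def intro!: prob_space.prob_le_1 prob_space_p[OF a])
    then show ?thesis
      using prob_space_p[OF a]
      by (subst nn_integral_eq_integral[symmetric]) (auto intro!: nn_integral_cong
          simp: ennreal_mult' ennreal_indicator prob_space_def finite_measure.emeasure_eq_measure)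
  qed
  also have "\<dots> = (\<integral>\<^sup>+\<omega>. emeasure (p a (X r \<omega>)) A \<partial>?D)"
    using BP measurable_compose[OF kernel measurable_emeasure_subprob_algebra[OF A]]
    by (subst nn_integral_density) auto
  also have "\<dots> = emeasure (?D \<bind> (\<lambda>\<omega>. p a (X r \<omega>))) A"
    using ne kernel A by (intro emeasure_bind[symmetric]) (auto simp: space_P cong: measurable_cong_sets)
  finally show "emeasure (distr ?D borel (X (r + a))) A = emeasure (?D \<bind> (\<lambda>\<omega>. p a (X r \<omega>))) A" .
qed

lemma integral_indicator_markov:
  assumes r: "0 \<le> r" and a: "0 \<le> a" and B: "B \<in> sets (F r)"
    and f: "f \<in> borel_measurable borel" "\<And>y. \<bar>f y\<bar> \<le> C"
  shows "(\<integral>\<omega>. indicator B \<omega> * f (X (r + a) \<omega>) \<partial>P x) = (\<integral>\<omega>. indicator B \<omega> * ptf p a f (X r \<omega>) \<partial>P x)"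
proof -
  let ?D = "density (P x) (indicator B)"
  have BP: "B \<in> sets (P x)" using sets_F[OF r] B by auto
  have Xr: "X r \<in> measurable (P x) borel" and Xra: "X (r + a) \<in> measurable (P x) borel"
    using measurable_X_P r a by auto
  have density: "(\<integral>\<omega>. h \<omega> \<partial>?D) = (\<integral>\<omega>. indicator B \<omega> * h \<omega> \<partial>P x)"
    if "h \<in> borel_measurable (P x)" for h :: "'w \<Rightarrow> real"
    using integral_density[of h "P x" "indicator B", unfolded ennreal_indicator] BP that by auto
  have "(\<integral>\<omega>. indicator B \<omega> * f (X (r + a) \<omega>) \<partial>P x) = (\<integral>y. f y \<partial>distr ?D borel (X (r + a)))"
    using f Xra by (simp add: density integral_distr cong: measurable_cong_sets)
  also have "\<dots> = (\<integral>y. f y \<partial>(?D \<bind> (\<lambda>\<omega>. p a (X r \<omega>))))"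
    by (simp add: distr_density_X_eq_bind[OF r a B])
  also have "\<dots> = (\<integral>\<omega>. ptf p a f (X r \<omega>) \<partial>?D)"
    unfolding ptf_def
  proof (rule integral_bind[where K=borel and B=C and B'=1])
    show "(\<lambda>\<omega>. p a (X r \<omega>)) \<in> measurable ?D (subprob_algebra borel)"
      using measurable_compose[OF Xr measurable_p[OF a]] by (simp cong: measurable_cong_sets)
    show "finite_measure ?D" using finite_measure_P BP by (rule finite_measure.finite_measure_restricted)
    show "AE \<omega> in ?D. emeasure (p a (X r \<omega>)) (space (p a (X r \<omega>))) \<le> ennreal 1"
      using prob_space_p[OF a] by (auto simp: prob_space.emeasure_space_1)
  qed (use f in auto)
  also have "\<dots> = (\<integral>\<omega>. indicator B \<omega> * ptf p a f (X r \<omega>) \<partial>P x)"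
    using measurable_compose[OF Xr borel_measurable_ptf[OF a f(1)]] by (simp add: density)
  finally show ?thesis .
qed

lemma integral_markov:
  assumes r: "0 \<le> r" and a: "0 \<le> a" and Y: "Y \<in> borel_measurable (F r)" "\<And>\<omega>. \<bar>Y \<omega>\<bar> \<le> CY"
    and f: "f \<in> borel_measurable borel" "\<And>y. \<bar>f y\<bar> \<le> C"
  shows "(\<integral>\<omega>. Y \<omega> * f (X (r + a) \<omega>) \<partial>P x) = (\<integral>\<omega>. Y \<omega> * ptf p a f (X r \<omega>) \<partial>P x)"
proof -
  interpret S: finite_measure_subalgebra "P x" "F r"
    using finite_measure_P subalgebra_F[OF r]
    by (simp add: finite_measure_subalgebra_def finite_measure_subalgebra_axioms_def)
  let ?Z = "\<lambda>\<omega>. f (X (r + a) \<omega>)" and ?W = "\<lambda>\<omega>. ptf p a f (X r \<omega>)"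
  have Z: "?Z \<in> borel_measurable (P x)" using measurable_compose[OF measurable_X_P f(1)] r a by auto
  have W: "?W \<in> borel_measurable (F r)"
    using measurable_compose[OF measurable_X_F borel_measurable_ptf[OF a f(1)]] r by auto
  have YP: "Y \<in> borel_measurable (P x)" using measurable_F_P[OF r Y(1)] .
  have cond_exp: "AE \<omega> in P x. real_cond_exp (P x) (F r) ?Z \<omega> = ?W \<omega>"
  proof (rule S.real_cond_exp_charact)
    fix A assume "A \<in> sets (F r)"
    then show "(\<integral>\<omega>\<in>A. ?Z \<omega> \<partial>P x) = (\<integral>\<omega>\<in>A. ?W \<omega> \<partial>P x)"
      unfolding set_lebesgue_integral_def using integral_indicator_markov[OF r a _ f] by simp
  next
    show "integrable (P x) ?Z" using Z f by (intro integrable_P_bounded) auto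
    show "integrable (P x) ?W"
      using measurable_F_P[OF r W] abs_ptf_le[OF a f] by (intro integrable_P_bounded) auto
  qed (use W in auto)
  have "integrable (P x) (\<lambda>\<omega>. Y \<omega> * ?Z \<omega>)"
    using YP Z Y(2) f(2) by (intro integrable_P_bounded[where C="CY * C"] abs_mult_le) auto
  from S.real_cond_exp_intg(2)[OF this Y(1) Z]
  have "(\<integral>\<omega>. Y \<omega> * ?Z \<omega> \<partial>P x) = (\<integral>\<omega>. Y \<omega> * real_cond_exp (P x) (F r) ?Z \<omega> \<partial>P x)" by simp
  also have "\<dots> = (\<integral>\<omega>. Y \<omega> * ?W \<omega> \<partial>P x)"
    using cond_exp YP measurable_F_P[OF r W]
    by (intro integral_cong_AE) (auto intro!: borel_measurable_times borel_measurable_cond_exp2)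
  finally show ?thesis .
qed

lemma integral_X:
  assumes a: "0 \<le> a" and f: "f \<in> borel_measurable borel" "\<And>y. \<bar>f y\<bar> \<le> C"
  shows "(\<integral>\<omega>. f (X a \<omega>) \<partial>P x) = ptf p a f x"
proof -
  have "(\<integral>\<omega>. 1 * f (X (0 + a) \<omega>) \<partial>P x) = (\<integral>\<omega>. 1 * ptf p a f (X 0 \<omega>) \<partial>P x)"
    by (rule integral_markov[where CY=1]) (use a f in auto)
  also have "\<dots> = (\<integral>\<omega>. ptf p a f x \<partial>P x)"
    using measurable_compose[OF measurable_X_P borel_measurable_ptf[OF a f(1)], of 0]
    by (intro integral_cong_AE) (auto intro: AE_mp[OF AE_X_0[of x]])
  finally show ?thesis using prob_space_P by (simp add: prob_space.prob_space)
qed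

end

section \<open>The Feynman-Kac representation\<close>

locale feynman_kac = markov_family p \<Omega> F X P
  for p :: "real \<Rightarrow> 'a::topological_space \<Rightarrow> 'a measure" and \<Omega> :: "'w set"
    and F :: "real \<Rightarrow> 'w measure" and X :: "real \<Rightarrow> 'w \<Rightarrow> 'a" and P :: "'a \<Rightarrow> 'w measure" +
  fixes w :: "'a \<Rightarrow> real" and Bw t0 \<epsilon> :: real
  assumes w_measurable: "w \<in> borel_measurable borel" and w_bound: "\<And>y. \<bar>w y\<bar> \<le> Bw"
    and w_nonneg: "\<And>y. 0 \<le> w y" and t0: "0 < t0" and eps: "0 < \<epsilon>"
begin

definition v_avg :: "'a \<Rightarrow> real" where
  "v_avg x = (1/t0) * (\<integral>s. indicator {0..t0} s * ptf p s w x \<partial>lborel)"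

definition v_eps :: "'a \<Rightarrow> real" where
  "v_eps x = v_avg x + \<epsilon>"

text \<open>\<open>Lv\<close> is the generator applied to \<open>v_avg\<close>, in the sense of \<open>ptf_v_eps\<close>.\<close>

definition Lv :: "'a \<Rightarrow> real" where
  "Lv x = (ptf p t0 w x - w x) / t0"

definition V_eps :: "'a \<Rightarrow> real" where
  "V_eps x = (1 / v_eps x) * Lv x"

definition bound_Lv :: real where
  "bound_Lv = 2 * Bw / t0"

definition bound_V :: real where
  "bound_V = bound_Lv / \<epsilon>"

lemma abs_ptf_w_le: "0 \<le> s \<Longrightarrow> \<bar>ptf p s w y\<bar> \<le> Bw"
  by (rule abs_ptf_le[OF _ w_measurable w_bound])

lemma bound_Lv_nonneg: "0 \<le> bound_Lv"
  using w_bound[of undefined] t0 by (auto simp: bound_Lv_def)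

lemma borel_measurable_v_avg: "v_avg \<in> borel_measurable borel"
proof -
  have "(\<lambda>z. ptf p (max 0 (snd z)) w (fst z)) \<in> borel_measurable (borel \<Otimes>\<^sub>M lborel)"
    using borel_measurable_ptf_comp[OF _ measurable_fst w_measurable, of snd] by simp
  then have "(\<lambda>(y, s). indicator {0..t0} s * ptf p (max 0 s) w y) \<in> borel_measurable (borel \<Otimes>\<^sub>M lborel)"
    by (simp add: split_beta' borel_measurable_times measurable_compose[OF measurable_snd])
  from lborel.borel_measurable_lebesgue_integral[OF this]
  have "(\<lambda>y. \<integral>s. indicator {0..t0} s * ptf p (max 0 s) w y \<partial>lborel) \<in> borel_measurable borel"
    by simp
  moreover have "indicator {0..t0} s * ptf p (max 0 s) w y = indicator {0..t0} s * ptf p s w y" for s y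
    by (auto simp: indicator_def)
  ultimately show ?thesis by (simp add: v_avg_def[abs_def])
qed

lemma v_avg_nonneg: "0 \<le> v_avg y" and v_avg_le: "v_avg y \<le> Bw"
proof -
  have "0 \<le> (\<integral>s. indicator {0..t0} s * ptf p s w y \<partial>lborel)"
    using w_nonneg by (intro integral_nonneg_AE AE_I2) (auto simp: indicator_def intro: ptf_nonneg)
  then show "0 \<le> v_avg y" using t0 by (simp add: v_avg_def)
  have meas: "(\<lambda>s. ptf p (max 0 s) w y) \<in> borel_measurable borel"
    using borel_measurable_ptf_comp[of "\<lambda>s. s" borel "\<lambda>_. y", OF _ _ w_measurable] by simp
  have "(\<integral>s. indicator {0..t0} s * ptf p s w y \<partial>lborel) = (\<integral>s. indicator {0..t0} s * ptf p (max 0 s) w y \<partial>lborel)"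
    by (intro Bochner_Integration.integral_cong) (auto simp: indicator_def)
  also have "\<dots> \<le> (\<integral>s. indicator {0..t0} s * Bw \<partial>lborel)"
    using meas abs_ptf_w_le w_bound[of y]
    by (intro integral_mono integrable_indicator_bounded[where c=0 and d=t0 and B=Bw])
      (auto simp: indicator_def abs_le_iff)
  also have "\<dots> = Bw * t0" using t0 by (simp add: mult.commute)
  finally show "v_avg y \<le> Bw" using t0 by (simp add: v_avg_def field_simps)
qed

lemma borel_measurable_v_eps: "v_eps \<in> borel_measurable borel"
  unfolding v_eps_def[abs_def] using borel_measurable_v_avg by measurable

lemma v_eps_ge: "\<epsilon> \<le> v_eps y" and abs_v_eps_le: "\<bar>v_eps y\<bar> \<le> Bw + \<epsilon>"
  using v_avg_nonneg[of y] v_avg_le[of y] eps by (auto simp: v_eps_def)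

lemma borel_measurable_Lv: "Lv \<in> borel_measurable borel"
proof -
  have "ptf p t0 w \<in> borel_measurable borel" using t0 by (intro borel_measurable_ptf w_measurable) simp
  then show ?thesis unfolding Lv_def[abs_def] using w_measurable by measurable
qed

lemma abs_Lv_le: "\<bar>Lv y\<bar> \<le> bound_Lv"
proof -
  have "\<bar>ptf p t0 w y - w y\<bar> \<le> 2 * Bw" using abs_ptf_w_le[of t0 y] w_bound[of y] t0 by linarith
  then show ?thesis unfolding Lv_def bound_Lv_def using t0 by (simp add: divide_right_mono)
qed

lemma borel_measurable_V_eps: "V_eps \<in> borel_measurable borel"
  unfolding V_eps_def[abs_def] using borel_measurable_v_eps borel_measurable_Lv by measurable

lemma abs_V_eps_le: "\<bar>V_eps y\<bar> \<le> bound_V"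
proof -
  have "\<bar>1 / v_eps y\<bar> \<le> 1 / \<epsilon>" using v_eps_ge[of y] eps by (simp add: frac_le)
  from abs_mult_le[OF this abs_Lv_le] show ?thesis by (simp add: V_eps_def bound_V_def)
qed

lemma V_eps_mult_v_eps: "V_eps y * v_eps y = Lv y"
  unfolding V_eps_def using v_eps_ge[of y] eps by simp

lemma ptf_v_eps: "0 \<le> a \<Longrightarrow> ptf p a v_eps y = v_eps y + (\<integral>s. indicator {0..a} s * ptf p s Lv y \<partial>lborel)"
proof -
  assume a: "0 \<le> a"
  have "ptf p a v_eps y = ptf p a v_avg y + \<epsilon>"
    unfolding v_eps_def[abs_def] using v_avg_nonneg v_avg_le
    by (intro ptf_add_const[OF a borel_measurable_v_avg, where B=Bw]) (simp add: abs_le_iff)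
  also have "ptf p a v_avg y = v_avg y + (\<integral>s. indicator {0..a} s * ptf p s Lv y \<partial>lborel)"
    unfolding v_avg_def[abs_def] Lv_def[abs_def] by (rule ptf_time_average[OF w_measurable w_bound t0 a])
  finally show ?thesis unfolding v_eps_def by simp
qed

definition V_path :: "real \<Rightarrow> 'w \<Rightarrow> real \<Rightarrow> real" where
  "V_path t \<omega> r = V_eps (X (max 0 (min t r)) \<omega>)"

definition Lv_path :: "real \<Rightarrow> 'w \<Rightarrow> real \<Rightarrow> real" where
  "Lv_path t \<omega> r = Lv (X (max 0 (min t r)) \<omega>)"

definition A_path :: "real \<Rightarrow> 'w \<Rightarrow> real \<Rightarrow> real" where
  "A_path t \<omega> = indef_integral (V_path t \<omega>)"

definition J_path :: "real \<Rightarrow> 'w \<Rightarrow> real \<Rightarrow> real" where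
  "J_path t \<omega> r = (\<integral>s. indicator {r..t} s * Lv_path t \<omega> s \<partial>lborel)"

lemma abs_V_path_le: "\<bar>V_path t \<omega> r\<bar> \<le> bound_V"
  unfolding V_path_def by (rule abs_V_eps_le)

lemma abs_Lv_path_le: "\<bar>Lv_path t \<omega> r\<bar> \<le> bound_Lv"
  unfolding Lv_path_def by (rule abs_Lv_le)

lemma abs_A_path_le: "r \<in> {0..t} \<Longrightarrow> \<bar>A_path t \<omega> r\<bar> \<le> bound_V * t"
  unfolding A_path_def using abs_V_path_le by (intro abs_indef_integral_le) auto

lemma exp_neg_A_path_le: "r \<in> {0..t} \<Longrightarrow> \<bar>exp (- A_path t \<omega> r)\<bar> \<le> exp (bound_V * t)"
  using abs_A_path_le[of r t \<omega>] by simp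

lemma abs_J_path_le: "r \<in> {0..t} \<Longrightarrow> \<bar>J_path t \<omega> r\<bar> \<le> bound_Lv * t"
proof -
  assume r: "r \<in> {0..t}"
  have "\<bar>J_path t \<omega> r\<bar> \<le> bound_Lv * (t - r)"
    unfolding J_path_def using r abs_Lv_path_le by (intro abs_integral_indicator_Icc_le) auto
  also have "\<dots> \<le> bound_Lv * t" using r bound_Lv_nonneg by (intro mult_left_mono) auto
  finally show ?thesis .
qed

lemma borel_measurable_V_path: "0 \<le> t \<Longrightarrow> \<omega> \<in> \<Omega> \<Longrightarrow> V_path t \<omega> \<in> borel_measurable borel"
  using measurable_compose[OF measurable_X_clip[OF _ measurable_ident_sets[OF refl] measurable_const_F]
      borel_measurable_V_eps]
  by (simp add: V_path_def[abs_def])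

lemma borel_measurable_Lv_path: "0 \<le> t \<Longrightarrow> \<omega> \<in> \<Omega> \<Longrightarrow> Lv_path t \<omega> \<in> borel_measurable borel"
  using measurable_compose[OF measurable_X_clip[OF _ measurable_ident_sets[OF refl] measurable_const_F]
      borel_measurable_Lv]
  by (simp add: Lv_path_def[abs_def])

lemma borel_measurable_A_path: "0 \<le> t \<Longrightarrow> \<omega> \<in> \<Omega> \<Longrightarrow> A_path t \<omega> \<in> borel_measurable borel"
  unfolding A_path_def by (intro borel_measurable_indef_integral borel_measurable_V_path)

lemma borel_measurable_J_path: "0 \<le> t \<Longrightarrow> \<omega> \<in> \<Omega> \<Longrightarrow> J_path t \<omega> \<in> borel_measurable borel"
  using borel_measurable_path_integral[OF _ measurable_ident_sets[OF refl] _ measurable_const_F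
      borel_measurable_Lv, where U="\<lambda>_. t"]
  by (simp add: J_path_def[abs_def] Lv_path_def)

lemma
  assumes t: "0 \<le> t"
  shows measurable_V_path_joint: "(\<lambda>z. V_path t (fst z) (snd z)) \<in> borel_measurable (P x \<Otimes>\<^sub>M lborel)"
    and measurable_Lv_path_joint: "(\<lambda>z. Lv_path t (fst z) (snd z)) \<in> borel_measurable (P x \<Otimes>\<^sub>M lborel)"
    and measurable_A_path_joint: "(\<lambda>z. A_path t (fst z) (snd z)) \<in> borel_measurable (P x \<Otimes>\<^sub>M lborel)"
    and measurable_J_path_joint: "(\<lambda>z. J_path t (fst z) (snd z)) \<in> borel_measurable (P x \<Otimes>\<^sub>M lborel)"
proof -
  have fst: "fst \<in> measurable (P x \<Otimes>\<^sub>M lborel) (F t)"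
    using measurable_compose[OF measurable_fst[of "P x" lborel] measurable_id_F[OF t]] by simp
  have snd: "snd \<in> borel_measurable (P x \<Otimes>\<^sub>M lborel)"
    using measurable_snd[of "P x" lborel] by simp
  show "(\<lambda>z. V_path t (fst z) (snd z)) \<in> borel_measurable (P x \<Otimes>\<^sub>M lborel)"
    using measurable_compose[OF measurable_X_clip[OF t snd fst] borel_measurable_V_eps]
    by (simp add: V_path_def)
  show "(\<lambda>z. Lv_path t (fst z) (snd z)) \<in> borel_measurable (P x \<Otimes>\<^sub>M lborel)"
    using measurable_compose[OF measurable_X_clip[OF t snd fst] borel_measurable_Lv]
    by (simp add: Lv_path_def)
  show "(\<lambda>z. A_path t (fst z) (snd z)) \<in> borel_measurable (P x \<Otimes>\<^sub>M lborel)"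
    using borel_measurable_path_integral[OF t _ snd fst borel_measurable_V_eps, of "\<lambda>_. 0"]
    by (simp add: A_path_def indef_integral_def V_path_def)
  show "(\<lambda>z. J_path t (fst z) (snd z)) \<in> borel_measurable (P x \<Otimes>\<^sub>M lborel)"
    using borel_measurable_path_integral[OF t snd _ fst borel_measurable_Lv, of "\<lambda>_. t"]
    by (simp add: J_path_def Lv_path_def)
qed

lemma
  assumes t: "0 \<le> t" and r: "r \<in> {0..t}"
  shows measurable_V_path_F: "(\<lambda>\<omega>. V_path t \<omega> r) \<in> borel_measurable (F r)"
    and measurable_A_path_F: "(\<lambda>\<omega>. A_path t \<omega> r) \<in> borel_measurable (F r)"
proof -
  show "(\<lambda>\<omega>. V_path t \<omega> r) \<in> borel_measurable (F r)"
    using measurable_compose[OF measurable_X_F[of r r] borel_measurable_V_eps] r by (simp add: V_path_def)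
  have "A_path t \<omega> r = (\<integral>y. indicator {0..r} y * V_eps (X (max 0 (min r y)) \<omega>) \<partial>lborel)" for \<omega>
    unfolding A_path_def indef_integral_def V_path_def using r
    by (intro Bochner_Integration.integral_cong) (auto simp: indicator_def min_def max_def)
  then show "(\<lambda>\<omega>. A_path t \<omega> r) \<in> borel_measurable (F r)"
    using borel_measurable_path_integral[of r "\<lambda>_. 0" "F r" "\<lambda>_. r" "\<lambda>\<omega>. \<omega>" V_eps] r borel_measurable_V_eps
    by simp
qed

lemma integral_F_times_J_path:
  assumes r: "r \<in> {0..t}" and Y: "Y \<in> borel_measurable (F r)" "\<And>\<omega>. \<bar>Y \<omega>\<bar> \<le> CY"
  shows "(\<integral>\<omega>. Y \<omega> * (ptf p (t - r) v_eps (X r \<omega>) - v_eps (X r \<omega>)) \<partial>P x) = (\<integral>\<omega>. Y \<omega> * J_path t \<omega> r \<partial>P x)"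
proof -
  have r0: "0 \<le> r" and t: "0 \<le> t" using r by auto
  have YP: "Y \<in> borel_measurable (P x)" using measurable_F_P[OF r0 Y(1)] .
  have Y_joint: "(\<lambda>z. Y (fst z)) \<in> borel_measurable (P x \<Otimes>\<^sub>M lborel)"
    using measurable_compose[OF measurable_fst YP] .
  have ptf_Lv_joint: "(\<lambda>z. ptf p (max 0 (snd z)) Lv (X r (fst z))) \<in> borel_measurable (P x \<Otimes>\<^sub>M lborel)"
    using borel_measurable_ptf_comp[OF _ measurable_compose[OF measurable_fst measurable_X_P[OF r0]] borel_measurable_Lv, of snd]
    by (simp add: measurable_snd[of "P x" lborel, simplified])
  have "(\<integral>\<omega>. Y \<omega> * (ptf p (t - r) v_eps (X r \<omega>) - v_eps (X r \<omega>)) \<partial>P x)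
      = (\<integral>\<omega>. (\<integral>s. indicator {0..t - r} s * (Y \<omega> * ptf p (max 0 s) Lv (X r \<omega>)) \<partial>lborel) \<partial>P x)"
  proof (intro Bochner_Integration.integral_cong refl)
    fix \<omega>
    have "(\<integral>s. indicator {0..t - r} s * (Y \<omega> * ptf p (max 0 s) Lv (X r \<omega>)) \<partial>lborel)
        = Y \<omega> * (\<integral>s. indicator {0..t - r} s * ptf p s Lv (X r \<omega>) \<partial>lborel)"
      by (subst integral_mult_right_zero[symmetric], intro Bochner_Integration.integral_cong)
        (auto simp: indicator_def)
    then show "Y \<omega> * (ptf p (t - r) v_eps (X r \<omega>) - v_eps (X r \<omega>))
        = (\<integral>s. indicator {0..t - r} s * (Y \<omega> * ptf p (max 0 s) Lv (X r \<omega>)) \<partial>lborel)"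
      using ptf_v_eps[of "t - r" "X r \<omega>"] r by simp
  qed
  also have "\<dots> = (\<integral>s. (\<integral>\<omega>. indicator {0..t - r} s * (Y \<omega> * ptf p (max 0 s) Lv (X r \<omega>)) \<partial>P x) \<partial>lborel)"
    using Y_joint ptf_Lv_joint Y(2) abs_ptf_le[OF _ borel_measurable_Lv abs_Lv_le]
    by (intro Fubini_integral_indicator_Icc[OF finite_measure_P, where B="CY * bound_Lv"]
        borel_measurable_times abs_mult_le) auto
  also have "\<dots> = (\<integral>s. indicator {0..t - r} s * (\<integral>\<omega>. Y \<omega> * Lv (X (r + s) \<omega>) \<partial>P x) \<partial>lborel)"
    using integral_markov[OF r0 _ Y borel_measurable_Lv abs_Lv_le]
    by (intro Bochner_Integration.integral_cong) (auto simp: indicator_def)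
  also have "\<dots> = (\<integral>s. indicator {r..t} s * (\<integral>\<omega>. Y \<omega> * Lv (X s \<omega>) \<partial>P x) \<partial>lborel)"
    using lborel_integral_real_affine[of 1 "\<lambda>s. indicator {r..t} s * (\<integral>\<omega>. Y \<omega> * Lv (X s \<omega>) \<partial>P x)" r]
    by (simp add: indicator_def le_diff_eq add.commute)
  also have "\<dots> = (\<integral>s. (\<integral>\<omega>. indicator {r..t} s * (Y \<omega> * Lv_path t \<omega> s) \<partial>P x) \<partial>lborel)"
    using r0 by (intro Bochner_Integration.integral_cong) (auto simp: indicator_def Lv_path_def)
  also have "\<dots> = (\<integral>\<omega>. (\<integral>s. indicator {r..t} s * (Y \<omega> * Lv_path t \<omega> s) \<partial>lborel) \<partial>P x)"
    using Y_joint measurable_Lv_path_joint[OF t] Y(2) abs_Lv_path_le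
    by (intro Fubini_integral_indicator_Icc[symmetric, OF finite_measure_P, where B="CY * bound_Lv"]
        borel_measurable_times abs_mult_le) auto
  also have "\<dots> = (\<integral>\<omega>. Y \<omega> * J_path t \<omega> r \<partial>P x)"
    by (simp add: J_path_def mult.left_commute)
  finally show ?thesis .
qed

lemma integral_F_times_v_eps:
  assumes r: "r \<in> {0..t}" and Y: "Y \<in> borel_measurable (F r)" "\<And>\<omega>. \<bar>Y \<omega>\<bar> \<le> CY"
  shows "(\<integral>\<omega>. Y \<omega> * v_eps (X t \<omega>) \<partial>P x)
       = (\<integral>\<omega>. Y \<omega> * v_eps (X r \<omega>) \<partial>P x) + (\<integral>\<omega>. Y \<omega> * J_path t \<omega> r \<partial>P x)"
proof -
  have r0: "0 \<le> r" and tr: "0 \<le> t - r" using r by auto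
  have YP: "Y \<in> borel_measurable (P x)" using measurable_F_P[OF r0 Y(1)] .
  have v_eps_X: "(\<lambda>\<omega>. v_eps (X r \<omega>)) \<in> borel_measurable (P x)"
    using measurable_compose[OF measurable_X_P[OF r0] borel_measurable_v_eps] .
  have ptf_v_eps_X: "(\<lambda>\<omega>. ptf p (t - r) v_eps (X r \<omega>)) \<in> borel_measurable (P x)"
    using measurable_compose[OF measurable_X_P[OF r0] borel_measurable_ptf[OF tr borel_measurable_v_eps]] .
  have ptf_bound: "\<bar>ptf p (t - r) v_eps y - v_eps y\<bar> \<le> 2 * (Bw + \<epsilon>)" for y
    using abs_ptf_le[OF tr borel_measurable_v_eps abs_v_eps_le, of y] abs_v_eps_le[of y]
      abs_triangle_ineq4[of "ptf p (t - r) v_eps y" "v_eps y"] by (simp add: abs_le_iff)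
  have "(\<integral>\<omega>. Y \<omega> * v_eps (X (r + (t - r)) \<omega>) \<partial>P x) = (\<integral>\<omega>. Y \<omega> * ptf p (t - r) v_eps (X r \<omega>) \<partial>P x)"
    by (rule integral_markov[OF r0 tr Y borel_measurable_v_eps abs_v_eps_le])
  also have "\<dots> = (\<integral>\<omega>. Y \<omega> * v_eps (X r \<omega>) + Y \<omega> * (ptf p (t - r) v_eps (X r \<omega>) - v_eps (X r \<omega>)) \<partial>P x)"
    by (simp add: algebra_simps)
  also have "\<dots> = (\<integral>\<omega>. Y \<omega> * v_eps (X r \<omega>) \<partial>P x)
      + (\<integral>\<omega>. Y \<omega> * (ptf p (t - r) v_eps (X r \<omega>) - v_eps (X r \<omega>)) \<partial>P x)"
  proof (rule Bochner_Integration.integral_add)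
    show "integrable (P x) (\<lambda>\<omega>. Y \<omega> * v_eps (X r \<omega>))"
      using YP v_eps_X Y(2) abs_v_eps_le
      by (intro integrable_P_bounded[where C="CY * (Bw + \<epsilon>)"] abs_mult_le) auto
    show "integrable (P x) (\<lambda>\<omega>. Y \<omega> * (ptf p (t - r) v_eps (X r \<omega>) - v_eps (X r \<omega>)))"
      using YP v_eps_X ptf_v_eps_X Y(2) ptf_bound
      by (intro integrable_P_bounded[where C="CY * (2 * (Bw + \<epsilon>))"] abs_mult_le) auto
  qed
  finally show ?thesis by (simp add: integral_F_times_J_path[OF r Y])
qed

lemma integral_killing_step:
  assumes r: "r \<in> {0..t}"
  shows "(\<integral>\<omega>. V_path t \<omega> r * exp (- A_path t \<omega> r) * v_eps (X t \<omega>) \<partial>P x)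
       = (\<integral>\<omega>. Lv_path t \<omega> r * exp (- A_path t \<omega> r)
             + V_path t \<omega> r * exp (- A_path t \<omega> r) * J_path t \<omega> r \<partial>P x)"
proof -
  define Y where "Y \<omega> = V_path t \<omega> r * exp (- A_path t \<omega> r)" for \<omega>
  have r0: "0 \<le> r" and t: "0 \<le> t" using r by auto
  have YF: "Y \<in> borel_measurable (F r)"
    unfolding Y_def[abs_def] using measurable_V_path_F[OF t r] measurable_A_path_F[OF t r] by measurable
  have YP: "Y \<in> borel_measurable (P x)" using measurable_F_P[OF r0 YF] .
  have Y_bound: "\<bar>Y \<omega>\<bar> \<le> bound_V * exp (bound_V * t)" for \<omega>
    unfolding Y_def by (rule abs_mult_le[OF abs_V_path_le exp_neg_A_path_le[OF r]])
  have Y_v_eps: "Y \<omega> * v_eps (X r \<omega>) = Lv_path t \<omega> r * exp (- A_path t \<omega> r)" for \<omega>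
    using r V_eps_mult_v_eps[of "X r \<omega>"] by (simp add: Y_def V_path_def Lv_path_def)
  have J: "(\<lambda>\<omega>. J_path t \<omega> r) \<in> borel_measurable (P x)"
    using measurable_compose[OF measurable_Pair[OF measurable_ident_sets[OF refl] measurable_const]
        measurable_J_path_joint[OF t, of x], of r] by (simp add: space_pair_measure)
  have "(\<integral>\<omega>. Y \<omega> * v_eps (X t \<omega>) \<partial>P x)
      = (\<integral>\<omega>. Y \<omega> * v_eps (X r \<omega>) \<partial>P x) + (\<integral>\<omega>. Y \<omega> * J_path t \<omega> r \<partial>P x)"
    by (rule integral_F_times_v_eps[OF r YF Y_bound])
  also have "\<dots> = (\<integral>\<omega>. Y \<omega> * v_eps (X r \<omega>) + Y \<omega> * J_path t \<omega> r \<partial>P x)"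
  proof (rule Bochner_Integration.integral_add[symmetric])
    show "integrable (P x) (\<lambda>\<omega>. Y \<omega> * v_eps (X r \<omega>))"
      using YP measurable_compose[OF measurable_X_P[OF r0] borel_measurable_v_eps] Y_bound abs_v_eps_le
      by (intro integrable_P_bounded[where C="bound_V * exp (bound_V * t) * (Bw + \<epsilon>)"] abs_mult_le) auto
    show "integrable (P x) (\<lambda>\<omega>. Y \<omega> * J_path t \<omega> r)"
      using YP J Y_bound abs_J_path_le[OF r]
      by (intro integrable_P_bounded[where C="bound_V * exp (bound_V * t) * (bound_Lv * t)"] abs_mult_le) auto
  qed
  finally show ?thesis unfolding Y_v_eps[symmetric] by (simp add: Y_def)
qed

lemma integral_pathwise_identity:
  assumes t: "0 \<le> t" and \<omega>: "\<omega> \<in> \<Omega>"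
  shows "(\<integral>r. indicator {0..t} r * (Lv_path t \<omega> r * exp (- A_path t \<omega> r)
            + V_path t \<omega> r * exp (- A_path t \<omega> r) * J_path t \<omega> r) \<partial>lborel)
       = (\<integral>r. indicator {0..t} r * Lv_path t \<omega> r \<partial>lborel)"
proof -
  note meas = borel_measurable_Lv_path[OF t \<omega>] borel_measurable_V_path[OF t \<omega>]
    borel_measurable_A_path[OF t \<omega>] borel_measurable_J_path[OF t \<omega>]
  have int1: "integrable lborel (\<lambda>r. indicator {0..t} r * (Lv_path t \<omega> r * exp (- A_path t \<omega> r)))"
    using meas abs_Lv_path_le exp_neg_A_path_le
    by (intro integrable_indicator_bounded[where c=0 and d=t and B="bound_Lv * exp (bound_V * t)"]
        abs_mult_le borel_measurable_times) auto
  have int2: "integrable lborel (\<lambda>r. indicator {0..t} r * (V_path t \<omega> r * exp (- A_path t \<omega> r) * J_path t \<omega> r))"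
    using meas abs_V_path_le exp_neg_A_path_le abs_J_path_le
    by (intro integrable_indicator_bounded[where c=0 and d=t and B="bound_V * exp (bound_V * t) * (bound_Lv * t)"]
        abs_mult_le borel_measurable_times) auto
  have int3: "integrable lborel (\<lambda>r. indicator {0..t} r * (Lv_path t \<omega> r * (1 - exp (- A_path t \<omega> r))))"
  proof -
    have "\<bar>1 - exp (- A_path t \<omega> r)\<bar> \<le> 1 + exp (bound_V * t)" if "r \<in> {0..t}" for r
    proof -
      have "exp (- A_path t \<omega> r) \<le> exp (bound_V * t)" using exp_neg_A_path_le[OF that, of \<omega>] by simp
      then show ?thesis unfolding abs_le_iff using exp_gt_zero[of "- A_path t \<omega> r"] by linarith
    qed
    then show ?thesis
      using meas abs_Lv_path_le
      by (intro integrable_indicator_bounded[where c=0 and d=t and B="bound_Lv * (1 + exp (bound_V * t))"]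
          abs_mult_le borel_measurable_times borel_measurable_diff) auto
  qed
  have "(\<integral>r. indicator {0..t} r * (V_path t \<omega> r * exp (- A_path t \<omega> r) * J_path t \<omega> r) \<partial>lborel)
      = (\<integral>r. indicator {0..t} r * (Lv_path t \<omega> r * (1 - exp (- A_path t \<omega> r))) \<partial>lborel)"
    unfolding J_path_def A_path_def
    by (rule integral_exp_neg_indef_integral_times_tail[OF meas(2) abs_V_path_le meas(1) abs_Lv_path_le t])
  then show ?thesis
    using Bochner_Integration.integral_add[OF int1 int2] Bochner_Integration.integral_add[OF int1 int3]
    by (simp add: algebra_simps)
qed

lemma integral_integral_Lv_path:
  assumes t: "0 \<le> t"
  shows "(\<integral>\<omega>. (\<integral>r. indicator {0..t} r * Lv_path t \<omega> r \<partial>lborel) \<partial>P x)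
       = (\<integral>r. indicator {0..t} r * ptf p r Lv x \<partial>lborel)"
proof -
  have "(\<integral>\<omega>. (\<integral>r. indicator {0..t} r * Lv_path t \<omega> r \<partial>lborel) \<partial>P x)
      = (\<integral>r. (\<integral>\<omega>. indicator {0..t} r * Lv_path t \<omega> r \<partial>P x) \<partial>lborel)"
    using measurable_Lv_path_joint[OF t] abs_Lv_path_le
    by (intro Fubini_integral_indicator_Icc[OF finite_measure_P]) auto
  also have "\<dots> = (\<integral>r. indicator {0..t} r * ptf p r Lv x \<partial>lborel)"
  proof (intro Bochner_Integration.integral_cong refl)
    fix r
    show "(\<integral>\<omega>. indicator {0..t} r * Lv_path t \<omega> r \<partial>P x) = indicator {0..t} r * ptf p r Lv x"
    proof (cases "r \<in> {0..t}")
      case True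
      then show ?thesis
        using integral_X[OF _ borel_measurable_Lv abs_Lv_le, of r x] by (simp add: Lv_path_def)
    qed simp
  qed
  finally show ?thesis .
qed

lemma integral_v_eps_times_killing:
  assumes t: "0 \<le> t"
  shows "(\<integral>\<omega>. v_eps (X t \<omega>) * (\<integral>r. indicator {0..t} r * (V_path t \<omega> r * exp (- A_path t \<omega> r)) \<partial>lborel) \<partial>P x)
       = (\<integral>r. indicator {0..t} r * ptf p r Lv x \<partial>lborel)"
proof -
  let ?VA = "\<lambda>\<omega> r. V_path t \<omega> r * exp (- A_path t \<omega> r)"
  let ?G = "\<lambda>\<omega> r. Lv_path t \<omega> r * exp (- A_path t \<omega> r) + ?VA \<omega> r * J_path t \<omega> r"
  note joint = measurable_V_path_joint[OF t] measurable_A_path_joint[OF t]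
    measurable_Lv_path_joint[OF t] measurable_J_path_joint[OF t]
  have v_joint: "(\<lambda>z. v_eps (X t (fst z))) \<in> borel_measurable (P x \<Otimes>\<^sub>M lborel)"
    using measurable_compose[OF measurable_fst measurable_compose[OF measurable_X_P[OF t] borel_measurable_v_eps]] .
  have VA_bound: "\<bar>?VA \<omega> r\<bar> \<le> bound_V * exp (bound_V * t)" if "r \<in> {0..t}" for \<omega> r
    by (rule abs_mult_le[OF abs_V_path_le exp_neg_A_path_le[OF that]])
  have G_bound: "\<bar>?G \<omega> r\<bar> \<le> bound_Lv * exp (bound_V * t) + bound_V * exp (bound_V * t) * (bound_Lv * t)"
    if "r \<in> {0..t}" for \<omega> r
    using abs_triangle_ineq[of "Lv_path t \<omega> r * exp (- A_path t \<omega> r)" "?VA \<omega> r * J_path t \<omega> r"]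
      abs_mult_le[OF abs_Lv_path_le[of t \<omega> r] exp_neg_A_path_le[OF that, of \<omega>]]
      abs_mult_le[OF VA_bound[OF that, of \<omega>] abs_J_path_le[OF that, of \<omega>]]
    by linarith
  have "(\<integral>\<omega>. v_eps (X t \<omega>) * (\<integral>r. indicator {0..t} r * ?VA \<omega> r \<partial>lborel) \<partial>P x)
      = (\<integral>\<omega>. (\<integral>r. indicator {0..t} r * (?VA \<omega> r * v_eps (X t \<omega>)) \<partial>lborel) \<partial>P x)"
  proof (intro Bochner_Integration.integral_cong refl)
    fix \<omega>
    have "v_eps (X t \<omega>) * (\<integral>r. indicator {0..t} r * ?VA \<omega> r \<partial>lborel)
        = (\<integral>r. v_eps (X t \<omega>) * (indicator {0..t} r * ?VA \<omega> r) \<partial>lborel)"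
      by (rule integral_mult_right_zero[symmetric])
    then show "v_eps (X t \<omega>) * (\<integral>r. indicator {0..t} r * ?VA \<omega> r \<partial>lborel)
        = (\<integral>r. indicator {0..t} r * (?VA \<omega> r * v_eps (X t \<omega>)) \<partial>lborel)"
      by (simp add: mult_ac)
  qed
  also have "\<dots> = (\<integral>r. (\<integral>\<omega>. indicator {0..t} r * (?VA \<omega> r * v_eps (X t \<omega>)) \<partial>P x) \<partial>lborel)"
    using joint v_joint abs_mult_le[OF VA_bound abs_v_eps_le]
    by (intro Fubini_integral_indicator_Icc[OF finite_measure_P, where B="bound_V * exp (bound_V * t) * (Bw + \<epsilon>)"]
        borel_measurable_times borel_measurable_exp borel_measurable_uminus) auto
  also have "\<dots> = (\<integral>r. (\<integral>\<omega>. indicator {0..t} r * ?G \<omega> r \<partial>P x) \<partial>lborel)"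
  proof (rule Bochner_Integration.integral_cong[OF refl])
    fix r
    show "(\<integral>\<omega>. indicator {0..t} r * (?VA \<omega> r * v_eps (X t \<omega>)) \<partial>P x) = (\<integral>\<omega>. indicator {0..t} r * ?G \<omega> r \<partial>P x)"
      using integral_killing_step[of r t x] by (cases "r \<in> {0..t}") simp_all
  qed
  also have "\<dots> = (\<integral>\<omega>. (\<integral>r. indicator {0..t} r * ?G \<omega> r \<partial>lborel) \<partial>P x)"
    using joint G_bound
    by (intro Fubini_integral_indicator_Icc[symmetric, OF finite_measure_P,
          where B="bound_Lv * exp (bound_V * t) + bound_V * exp (bound_V * t) * (bound_Lv * t)"]
        borel_measurable_add borel_measurable_times borel_measurable_exp borel_measurable_uminus) auto
  also have "\<dots> = (\<integral>\<omega>. (\<integral>r. indicator {0..t} r * Lv_path t \<omega> r \<partial>lborel) \<partial>P x)"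
    using integral_pathwise_identity[OF t] by (rule Bochner_Integration.integral_cong[OF refl]) (simp add: space_P)
  also have "\<dots> = (\<integral>r. indicator {0..t} r * ptf p r Lv x \<partial>lborel)"
    by (rule integral_integral_Lv_path[OF t])
  finally show ?thesis .
qed

theorem integral_v_eps_exp_neg_A_path:
  assumes t: "0 \<le> t"
  shows "(\<integral>\<omega>. v_eps (X t \<omega>) * exp (- A_path t \<omega> t) \<partial>P x) = v_eps x"
proof -
  define K where "K \<omega> = (\<integral>r. indicator {0..t} r * (V_path t \<omega> r * exp (- A_path t \<omega> r)) \<partial>lborel)" for \<omega>
  have K_meas: "K \<in> borel_measurable (P x)"
  proof -
    have "(\<lambda>(\<omega>, r). indicator {0..t} r * (V_path t \<omega> r * exp (- A_path t \<omega> r))) \<in> borel_measurable (P x \<Otimes>\<^sub>M lborel)"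
      using measurable_V_path_joint[OF t] measurable_A_path_joint[OF t]
      by (simp add: split_beta' borel_measurable_times measurable_compose[OF measurable_snd])
    from lborel.borel_measurable_lebesgue_integral[OF this] show ?thesis by (simp add: K_def[abs_def])
  qed
  have K_bound: "\<bar>K \<omega>\<bar> \<le> bound_V * exp (bound_V * t) * (t - 0)" for \<omega>
    unfolding K_def using t abs_mult_le[OF abs_V_path_le exp_neg_A_path_le]
    by (intro abs_integral_indicator_Icc_le) auto
  have v_eps_X: "(\<lambda>\<omega>. v_eps (X t \<omega>)) \<in> borel_measurable (P x)"
    using measurable_compose[OF measurable_X_P[OF t] borel_measurable_v_eps] .
  have "(\<integral>\<omega>. v_eps (X t \<omega>) * exp (- A_path t \<omega> t) \<partial>P x) = (\<integral>\<omega>. v_eps (X t \<omega>) - v_eps (X t \<omega>) * K \<omega> \<partial>P x)"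
  proof (intro Bochner_Integration.integral_cong refl)
    fix \<omega> assume "\<omega> \<in> space (P x)"
    then have "K \<omega> = 1 - exp (- A_path t \<omega> t)"
      unfolding K_def A_path_def using t space_P
      by (intro integral_times_exp_neg_indef_integral[where B=bound_V] borel_measurable_V_path abs_V_path_le) auto
    then show "v_eps (X t \<omega>) * exp (- A_path t \<omega> t) = v_eps (X t \<omega>) - v_eps (X t \<omega>) * K \<omega>"
      by (simp add: right_diff_distrib)
  qed
  also have "\<dots> = (\<integral>\<omega>. v_eps (X t \<omega>) \<partial>P x) - (\<integral>\<omega>. v_eps (X t \<omega>) * K \<omega> \<partial>P x)"
  proof (rule Bochner_Integration.integral_diff)
    show "integrable (P x) (\<lambda>\<omega>. v_eps (X t \<omega>))"
      using v_eps_X abs_v_eps_le by (intro integrable_P_bounded) auto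
    show "integrable (P x) (\<lambda>\<omega>. v_eps (X t \<omega>) * K \<omega>)"
      using v_eps_X K_meas abs_v_eps_le K_bound
      by (intro integrable_P_bounded[where C="(Bw + \<epsilon>) * (bound_V * exp (bound_V * t) * (t - 0))"]
          abs_mult_le) auto
  qed
  also have "\<dots> = ptf p t v_eps x - (\<integral>r. indicator {0..t} r * ptf p r Lv x \<partial>lborel)"
    using integral_X[OF t borel_measurable_v_eps abs_v_eps_le] integral_v_eps_times_killing[OF t]
    by (simp add: K_def)
  also have "\<dots> = v_eps x"
    by (simp add: ptf_v_eps[OF t])
  finally show ?thesis .
qed

end

theorem corollary2p6:
  fixes m :: "'a::topological_space measure"
    and p :: "real \<Rightarrow> 'a \<Rightarrow> 'a measure"
    and \<Omega> :: "'w set" and F :: "real \<Rightarrow> 'w measure"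
    and X :: "real \<Rightarrow> 'w \<Rightarrow> 'a" and P :: "'a \<Rightarrow> 'w measure"
    and u :: "'a \<Rightarrow> real" and \<eta> t0 \<epsilon> :: real
  assumes lusin: "lusin_space TYPE('a)"
    and m: "sigma_finite_measure m" "sets m = sets borel"
    and p: "transition_function p"
    and X: "markov_process p \<Omega> F X P"
    and u: "u \<in> Dset m"
    and eta: "\<eta> \<ge> 0" and t0: "t0 > 0" and eps: "\<epsilon> > 0"
  defines "ut \<equiv> ptf p \<eta> u"
  defines "v \<equiv> (\<lambda>x. (1 / t0) * (\<integral>s\<in>{0..t0}. ptf p s ut x \<partial>lborel))"
  defines "v\<epsilon> \<equiv> (\<lambda>x. v x + \<epsilon>)"
  defines "V\<epsilon> \<equiv> (\<lambda>x. (1 / v\<epsilon> x) * ((ptf p t0 ut x - ut x) / t0))"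
  shows "\<forall>t>0. \<forall>x. v\<epsilon> x =
           (\<integral>\<omega>. v\<epsilon> (X t \<omega>) * exp (- (\<integral>s\<in>{0..t}. V\<epsilon> (X s \<omega>) \<partial>lborel)) \<partial>P x)"
proof (intro allI impI)
  fix t :: real and x :: 'a
  assume t: "t > 0"
  interpret transition_kernel p by (rule transition_kernel.intro[OF p])
  have u_meas: "u \<in> borel_measurable borel" and u_nonneg: "\<And>y. 0 \<le> u y" and "bounded (range u)"
    using u by (auto simp: Dset_def)
  then obtain Bu where Bu: "\<And>y. \<bar>u y\<bar> \<le> Bu"
    unfolding bounded_iff by auto
  interpret feynman_kac p \<Omega> F X P ut Bu t0 \<epsilon>
    using p X t0 eps ptf_nonneg[OF u_nonneg] borel_measurable_ptf[OF eta u_meas] abs_ptf_le[OF eta u_meas Bu]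
    by unfold_locales (simp_all add: ut_def)
  have "v\<epsilon> = v_eps" and "V\<epsilon> = V_eps"
    by (simp_all add: fun_eq_iff v\<epsilon>_def v_def v_eps_def v_avg_def V\<epsilon>_def V_eps_def Lv_def
        set_lebesgue_integral_def mult.commute)
  moreover have "(\<integral>s\<in>{0..t}. V_eps (X s \<omega>) \<partial>lborel) = A_path t \<omega> t" for \<omega>
    unfolding set_lebesgue_integral_def A_path_def indef_integral_def V_path_def
    by (intro Bochner_Integration.integral_cong) (auto simp: indicator_def)
  ultimately show "v\<epsilon> x = (\<integral>\<omega>. v\<epsilon> (X t \<omega>) * exp (- (\<integral>s\<in>{0..t}. V\<epsilon> (X s \<omega>) \<partial>lborel)) \<partial>P x)"
    using integral_v_eps_exp_neg_A_path[of t x] t by simp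
qed

end
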